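(* There exists a feature map $f:\mathbb R^{N_0}\times[0,\infty)\to\mathcal H$ (with $\mathcal H$ a Hilbert space, e.g. $\ell^2$) such that for every finite collection of inputs $x_1,\dots,x_P\in\mathbb R^{N_0}$ the kernel matrix $(\Phi_c)_{\alpha\beta}=\langle f(x_\alpha,c),f(x_\beta,c)\rangle$ solves the matrix ODE $\mathrm d\Phi_c=b(\Phi_c)\,\mathrm dc$ with $\Phi_0=\big[\frac1{N_0}\langle x_\alpha,x_\beta\rangle\big]_{\alpha,\beta}$, where $b(\Phi)=D^{1/2}\rho(D^{-1/2}\Phi D^{-1/2})D^{1/2}$, $D=\mathrm{diag}(\Phi)$, and $\rho(x)=\frac{(c_+-c_-)^2}{2\pi}(\sqrt{1-x^2}-x\arccos x)$ applied entrywise. In particular $f$ does not depend on the particular finite set of inputs.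
   Context: $c_+,c_-\in\mathbb R$ are the leaky-ReLU parameters of the shaped activation $\phi_s(x)=x+\frac1s(c_+\max(x,0)+c_-\min(x,0))$. *)

theory Defs
  imports "HOL-Analysis.Analysis"
begin

text \<open>The Hilbert space is realised concretely as l2 over nat: sequences
  with summable squares, with the usual inner product.\<close>

definition in_ell2 :: "(nat \<Rightarrow> real) \<Rightarrow> bool" where
  "in_ell2 u \<longleftrightarrow> summable (\<lambda>k. (u k)\<^sup>2)"

definition ell2_inner :: "(nat \<Rightarrow> real) \<Rightarrow> (nat \<Rightarrow> real) \<Rightarrow> real" where
  "ell2_inner u v = (\<Sum>k. u k * v k)"

definition rho :: "real \<Rightarrow> real \<Rightarrow> real \<Rightarrow> real" where
  "rho cp cm x = (cp - cm)\<^sup>2 / (2 * pi) * (sqrt (1 - x\<^sup>2) - x * arccos x)"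

text \<open>Entry (a,b) of b(Phi) = D^{1/2} rho(D^{-1/2} Phi D^{-1/2}) D^{1/2},
  with D = diag(Phi) and rho applied entrywise; matrices are represented
  as functions nat => nat => real.\<close>
definition drift :: "real \<Rightarrow> real \<Rightarrow> (nat \<Rightarrow> nat \<Rightarrow> real) \<Rightarrow> nat \<Rightarrow> nat \<Rightarrow> real" where
  "drift cp cm \<Phi> a b =
     sqrt (\<Phi> a a) * rho cp cm (\<Phi> a b / (sqrt (\<Phi> a a) * sqrt (\<Phi> b b))) * sqrt (\<Phi> b b)"

end

theory Submission
  imports Defs
begin

(* Write l = (c_+ - c_-)^2 / 4 and J z = (2/pi) (sqrt (1 - z^2) + z arcsin z), so that
   rho = l (J - id) on [-1, 1]. An entry of the kernel matrix is then
   |x_a| |x_b| / N_0 times theta(c), where theta solves theta' = l (J theta - theta) from the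
   initial cosine theta(0) = sgn x_a . sgn x_b; the diagonal stays at |x|^2 / N_0 because
   theta = 1 is a solution. J is a power series in z with nonnegative coefficients, an Euler
   step of the ODE is a convex combination of the identity and J, and the class of such power
   series is closed under composition and uniform limits. Hence theta(c) is a series
   sum_j a_j(c) theta(0)^j with a_j(c) >= 0, and since (u . v)^j is the inner product of the
   degree-j monomial features, weighting those by sqrt (a_j(c)) gives one feature map that works
   for all finite sets of inputs at once. *)

section \<open>Power series with nonnegative coefficients\<close>

definition nonneg_power_series :: "(real \<Rightarrow> real) \<Rightarrow> bool" where
  "nonneg_power_series g \<longleftrightarrow>
     (\<exists>a. (\<forall>j. 0 \<le> a j) \<and> summable a \<and> (\<forall>\<theta>\<in>{-1..1}. (\<lambda>j. a j * \<theta>^j) sums g \<theta>))"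

lemma nonneg_power_seriesI:
  assumes "\<And>j. 0 \<le> a j" "summable a" "\<And>\<theta>. \<theta> \<in> {-1..1} \<Longrightarrow> (\<lambda>j. a j * \<theta>^j) sums g \<theta>"
  shows "nonneg_power_series g"
  using assms unfolding nonneg_power_series_def by blast

lemma nonneg_power_seriesE:
  assumes "nonneg_power_series g"
  obtains a where "\<And>j. 0 \<le> a j" "summable a" "\<And>\<theta>. \<theta> \<in> {-1..1} \<Longrightarrow> (\<lambda>j. a j * \<theta>^j) sums g \<theta>"
  using assms unfolding nonneg_power_series_def by blast

lemma nonneg_power_series_cong:
  "nonneg_power_series g \<Longrightarrow> (\<And>\<theta>. \<theta> \<in> {-1..1} \<Longrightarrow> g \<theta> = h \<theta>) \<Longrightarrow> nonneg_power_series h"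
  unfolding nonneg_power_series_def by auto

lemma abs_coeff_power_le:
  fixes a \<theta> :: real
  assumes "0 \<le> a" "\<bar>\<theta>\<bar> \<le> 1"
  shows "\<bar>a * \<theta>^j\<bar> \<le> a"
  using assms by (simp add: abs_mult power_abs mult_left_le power_le_one)

lemma summable_abs_power_series:
  fixes \<theta> :: real
  assumes "\<And>j. 0 \<le> a j" "summable a" "\<bar>\<theta>\<bar> \<le> 1"
  shows "summable (\<lambda>j. \<bar>a j * \<theta>^j\<bar>)"
  by (rule summable_comparison_test'[OF assms(2)]) (use assms abs_coeff_power_le in auto)

lemma uniform_limit_power_series:
  assumes "\<And>j. 0 \<le> a j" "summable a"
  shows "uniform_limit {-1..1} (\<lambda>n \<theta>. \<Sum>j<n. a j * \<theta>^j) (\<lambda>\<theta>::real. \<Sum>j. a j * \<theta>^j) sequentially"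
  by (rule Weierstrass_m_test[OF _ assms(2)]) (use assms abs_coeff_power_le in auto)

lemma continuous_on_power_series:
  assumes "\<And>j. 0 \<le> a j" "summable a"
  shows "continuous_on {-1..1} (\<lambda>\<theta>::real. \<Sum>j. a j * \<theta>^j)"
  by (rule uniform_limit_theorem[OF _ uniform_limit_power_series[OF assms]])
     (auto intro!: always_eventually continuous_intros)

lemma nonneg_power_series_continuous_on:
  assumes "nonneg_power_series g"
  shows "continuous_on {-1..1} g"
proof -
  obtain a where a: "\<And>j. 0 \<le> a j" "summable a" "\<And>\<theta>. \<theta> \<in> {-1..1} \<Longrightarrow> (\<lambda>j. a j * \<theta>^j) sums g \<theta>"
    using assms nonneg_power_seriesE by blast
  show ?thesis
    by (rule continuous_on_cong[THEN iffD1, OF refl _ continuous_on_power_series[OF a(1,2)]])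
       (use a(3) in \<open>simp add: sums_iff\<close>)
qed

lemma nonneg_power_series_bound:
  assumes "nonneg_power_series g" "\<theta> \<in> {-1..1}"
  shows "\<bar>g \<theta>\<bar> \<le> g 1"
proof -
  obtain a where a: "\<And>j. 0 \<le> a j" "summable a" "\<And>\<theta>. \<theta> \<in> {-1..1} \<Longrightarrow> (\<lambda>j. a j * \<theta>^j) sums g \<theta>"
    using assms(1) nonneg_power_seriesE by blast
  have s: "summable (\<lambda>j. \<bar>a j * \<theta>^j\<bar>)"
    using assms(2) by (intro summable_abs_power_series a) auto
  have "\<bar>g \<theta>\<bar> = \<bar>\<Sum>j. a j * \<theta>^j\<bar>" using a(3)[OF assms(2)] by (simp add: sums_iff)
  also have "\<dots> \<le> (\<Sum>j. \<bar>a j * \<theta>^j\<bar>)" by (rule summable_rabs[OF s])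
  also have "\<dots> \<le> (\<Sum>j. a j)"
    using assms(2) by (intro suminf_le s a(2) abs_coeff_power_le a(1)) auto
  also have "\<dots> = g 1" using a(3)[of 1] by (simp add: sums_iff)
  finally show ?thesis .
qed

lemma summable_if_power_series_tendsto_left:
  fixes a :: "nat \<Rightarrow> real"
  assumes a0: "\<And>j. 0 \<le> a j"
    and sums: "\<And>x. x \<in> {0<..<1} \<Longrightarrow> (\<lambda>j. a j * x^j) sums g x"
    and lim: "(g \<longlongrightarrow> L) (at_left 1)"
  shows "summable a"
proof (rule summableI_nonneg_bounded[where x = L])
  fix N
  have partial: "((\<lambda>x. \<Sum>j<N. a j * x^j) \<longlongrightarrow> (\<Sum>j<N. a j * 1^j)) (at_left 1)"
    by (intro tendsto_intros)
  have le: "(\<Sum>j<N. a j * x^j) \<le> g x" if "x \<in> {0<..<1}" for x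
  proof -
    have s: "summable (\<lambda>j. a j * x^j)" "(\<Sum>j. a j * x^j) = g x"
      using sums[OF that] by (simp_all add: sums_iff)
    have "(\<Sum>j<N. a j * x^j) \<le> (\<Sum>j. a j * x^j)"
      by (rule sum_le_suminf[OF s(1)]) (use a0 that in auto)
    then show ?thesis using s(2) by simp
  qed
  have "\<forall>\<^sub>F x in at_left 1. x \<in> {0<..<1::real}" by (rule eventually_at_left_real) simp
  then have "\<forall>\<^sub>F x in at_left 1. (\<Sum>j<N. a j * x^j) \<le> g x" by eventually_elim (rule le)
  from tendsto_le[OF trivial_limit_at_left_real lim partial this] show "sum a {..<N} \<le> L" by simp
qed (rule a0)

lemma nonneg_power_seriesI_open:
  fixes g :: "real \<Rightarrow> real"
  assumes a0: "\<And>j. 0 \<le> a j"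
    and sums: "\<And>\<theta>. \<theta> \<in> {-1<..<1} \<Longrightarrow> (\<lambda>j. a j * \<theta>^j) sums g \<theta>"
    and cont: "continuous_on {-1..1} g"
  shows "nonneg_power_series g"
proof -
  have summable: "summable a"
    using a0 sums continuous_on_Icc_at_leftD[OF cont]
    by (intro summable_if_power_series_tendsto_left) auto
  show ?thesis
  proof (rule nonneg_power_seriesI[OF a0 summable])
    fix \<theta> :: real assume \<theta>: "\<theta> \<in> {-1..1}"
    have closure: "closure {-1<..<1} = {-1..1::real}" by simp
    have "continuous_on {-1..1} (\<lambda>\<theta>. (\<Sum>j. a j * \<theta>^j) - g \<theta>)"
      by (intro continuous_on_diff continuous_on_power_series a0 summable cont)
    moreover have "(\<Sum>j. a j * t^j) - g t = 0" if "t \<in> {-1<..<1}" for t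
      using sums[OF that] by (simp add: sums_iff)
    ultimately have "(\<Sum>j. a j * \<theta>^j) - g \<theta> = 0"
      by (rule continuous_constant_on_closure[where S = "{-1<..<1::real}", unfolded closure])
         (use \<theta> in auto)
    moreover have "summable (\<lambda>j. a j * \<theta>^j)"
      using \<theta> by (intro summable_rabs_cancel[OF summable_abs_power_series] a0 summable) auto
    ultimately show "(\<lambda>j. a j * \<theta>^j) sums g \<theta>" by (simp add: sums_iff)
  qed
qed

lemma nonneg_power_series_const: "0 \<le> c \<Longrightarrow> nonneg_power_series (\<lambda>\<theta>. c)"
  by (rule nonneg_power_seriesI[of "\<lambda>j. if j = 0 then c else 0"])
     (auto intro: sums_summable[OF sums_single] sums_single[THEN sums_cong[THEN iffD1, rotated]])

lemma nonneg_power_series_ident: "nonneg_power_series (\<lambda>\<theta>. \<theta>)"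
proof (rule nonneg_power_seriesI[of "\<lambda>j. if j = 1 then 1 else 0"])
  show "summable (\<lambda>j. if j = 1 then 1 else 0 :: real)"
    using sums_summable[OF sums_single[of 1 "\<lambda>_. 1::real"]] by simp
  have "(\<lambda>j. (if j = 1 then 1 else 0) * \<theta>^j) = (\<lambda>j. if j = 1 then \<theta>^j else 0)" for \<theta> :: real
    by auto
  then show "(\<lambda>j. (if j = 1 then 1 else 0) * \<theta>^j) sums \<theta>" for \<theta> :: real
    using sums_single[of 1 "\<lambda>j. \<theta>^j"] by simp
qed auto

lemma nonneg_power_series_add:
  assumes "nonneg_power_series g" "nonneg_power_series h"
  shows "nonneg_power_series (\<lambda>\<theta>. g \<theta> + h \<theta>)"
proof -
  obtain a where a: "\<And>j. 0 \<le> a j" "summable a" "\<And>\<theta>. \<theta> \<in> {-1..1} \<Longrightarrow> (\<lambda>j. a j * \<theta>^j) sums g \<theta>"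
    using assms(1) nonneg_power_seriesE by blast
  obtain b where b: "\<And>j. 0 \<le> b j" "summable b" "\<And>\<theta>. \<theta> \<in> {-1..1} \<Longrightarrow> (\<lambda>j. b j * \<theta>^j) sums h \<theta>"
    using assms(2) nonneg_power_seriesE by blast
  show ?thesis
    by (rule nonneg_power_seriesI[of "\<lambda>j. a j + b j"])
       (use a b in \<open>auto intro: summable_add sums_add simp: distrib_right\<close>)
qed

lemma nonneg_power_series_cmult:
  assumes "0 \<le> c" "nonneg_power_series g"
  shows "nonneg_power_series (\<lambda>\<theta>. c * g \<theta>)"
proof -
  obtain a where a: "\<And>j. 0 \<le> a j" "summable a" "\<And>\<theta>. \<theta> \<in> {-1..1} \<Longrightarrow> (\<lambda>j. a j * \<theta>^j) sums g \<theta>"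
    using assms(2) nonneg_power_seriesE by blast
  show ?thesis
    by (rule nonneg_power_seriesI[of "\<lambda>j. c * a j"])
       (use a assms(1) in \<open>auto intro: summable_mult sums_mult simp: mult.assoc\<close>)
qed

lemma nonneg_power_series_mult:
  assumes "nonneg_power_series g" "nonneg_power_series h"
  shows "nonneg_power_series (\<lambda>\<theta>. g \<theta> * h \<theta>)"
proof -
  obtain a where a: "\<And>j. 0 \<le> a j" "summable a" "\<And>\<theta>. \<theta> \<in> {-1..1} \<Longrightarrow> (\<lambda>j. a j * \<theta>^j) sums g \<theta>"
    using assms(1) nonneg_power_seriesE by blast
  obtain b where b: "\<And>j. 0 \<le> b j" "summable b" "\<And>\<theta>. \<theta> \<in> {-1..1} \<Longrightarrow> (\<lambda>j. b j * \<theta>^j) sums h \<theta>"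
    using assms(2) nonneg_power_seriesE by blast
  define c where "c k = (\<Sum>i\<le>k. a i * b (k - i))" for k
  have c_sums: "(\<lambda>k. c k * \<theta>^k) sums (g \<theta> * h \<theta>)" if \<theta>: "\<theta> \<in> {-1..1}" for \<theta> :: real
  proof -
    have "(\<lambda>k. \<Sum>i\<le>k. (a i * \<theta>^i) * (b (k - i) * \<theta>^(k - i))) sums
          ((\<Sum>i. a i * \<theta>^i) * (\<Sum>i. b i * \<theta>^i))"
      using summable_abs_power_series[OF a(1,2), of \<theta>] summable_abs_power_series[OF b(1,2), of \<theta>] \<theta>
      by (intro Cauchy_product_sums) auto
    also have "(\<lambda>k. \<Sum>i\<le>k. (a i * \<theta>^i) * (b (k - i) * \<theta>^(k - i))) = (\<lambda>k. c k * \<theta>^k)"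
    proof
      fix k
      have "(a i * \<theta>^i) * (b (k - i) * \<theta>^(k - i)) = a i * b (k - i) * \<theta>^k" if "i \<le> k" for i
      proof -
        have "\<theta>^i * \<theta>^(k - i) = \<theta>^k" using that by (simp flip: power_add)
        then show ?thesis by (simp add: algebra_simps)
      qed
      then have "(\<Sum>i\<le>k. (a i * \<theta>^i) * (b (k - i) * \<theta>^(k - i))) = (\<Sum>i\<le>k. a i * b (k - i) * \<theta>^k)"
        by (intro sum.cong) auto
      then show "(\<Sum>i\<le>k. (a i * \<theta>^i) * (b (k - i) * \<theta>^(k - i))) = c k * \<theta>^k"
        by (simp only: c_def sum_distrib_right)
    qed
    finally show ?thesis using a(3) b(3) \<theta> by (simp add: sums_iff)
  qed
  show ?thesis
  proof (rule nonneg_power_seriesI[OF _ _ c_sums])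
    show "0 \<le> c k" for k unfolding c_def using a(1) b(1) by (intro sum_nonneg mult_nonneg_nonneg)
    show "summable c" using c_sums[of 1] by (simp add: sums_iff)
  qed
qed

lemma nonneg_power_series_power:
  "nonneg_power_series g \<Longrightarrow> nonneg_power_series (\<lambda>\<theta>. g \<theta> ^ n)"
  by (induction n) (auto intro: nonneg_power_series_mult nonneg_power_series_const[of 1, simplified])

lemma nonneg_power_series_sum:
  "(\<And>i. i < (n::nat) \<Longrightarrow> nonneg_power_series (f i)) \<Longrightarrow> nonneg_power_series (\<lambda>\<theta>. \<Sum>i<n. f i \<theta>)"
  by (induction n) (auto intro: nonneg_power_series_add nonneg_power_series_const[of 0, simplified])

lemma power_series_tail_le:
  fixes \<theta> :: real
  assumes a0: "\<And>j. 0 \<le> a j" and summable: "summable a" and \<theta>: "\<bar>\<theta>\<bar> \<le> 1"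
  shows "\<bar>(\<Sum>j. a j * \<theta>^j) - (\<Sum>j<n. a j * \<theta>^j)\<bar> \<le> (\<Sum>j. a j) * \<bar>\<theta>\<bar>^n"
proof -
  have abs_summable: "summable (\<lambda>j. \<bar>a (j + n) * \<theta>^(j + n)\<bar>)"
    using summable_ignore_initial_segment[OF summable_abs_power_series[OF a0 summable \<theta>]] .
  have term_le: "\<bar>a (j + n) * \<theta>^(j + n)\<bar> \<le> a (j + n) * \<bar>\<theta>\<bar>^n" for j
  proof -
    have "\<bar>\<theta>\<bar>^j * \<bar>\<theta>\<bar>^n \<le> \<bar>\<theta>\<bar>^n" using \<theta> by (intro mult_left_le_one_le) (auto intro: power_le_one)
    then show ?thesis using a0 by (simp add: abs_mult power_abs power_add mult_left_mono)
  qed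
  have "\<bar>(\<Sum>j. a j * \<theta>^j) - (\<Sum>j<n. a j * \<theta>^j)\<bar> = \<bar>\<Sum>j. a (j + n) * \<theta>^(j + n)\<bar>"
    using suminf_split_initial_segment[OF summable_rabs_cancel[OF
          summable_abs_power_series[OF a0 summable \<theta>]], of n] by simp
  also have "\<dots> \<le> (\<Sum>j. \<bar>a (j + n) * \<theta>^(j + n)\<bar>)" by (rule summable_rabs[OF abs_summable])
  also have "\<dots> \<le> (\<Sum>j. a (j + n) * \<bar>\<theta>\<bar>^n)"
    by (rule suminf_le[OF term_le abs_summable summable_mult2[OF summable_ignore_initial_segment[OF summable]]])
  also have "\<dots> = (\<Sum>j. a (j + n)) * \<bar>\<theta>\<bar>^n"
    by (rule suminf_mult2[OF summable_ignore_initial_segment[OF summable], symmetric])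
  also have "\<dots> \<le> (\<Sum>j. a j) * \<bar>\<theta>\<bar>^n"
    using suminf_split_initial_segment[OF summable, of n] a0
    by (intro mult_right_mono) (auto intro: sum_nonneg)
  finally show ?thesis .
qed

lemma convergent_if_uniformly_approximable:
  fixes x :: "nat \<Rightarrow> real"
  assumes "\<And>e. e > 0 \<Longrightarrow> \<exists>y. convergent y \<and> (\<forall>m. \<bar>x m - y m\<bar> \<le> e)"
  shows "convergent x"
proof (rule Cauchy_convergent, rule metric_CauchyI)
  fix e :: real assume "e > 0"
  then obtain y where y: "convergent y" "\<And>m. \<bar>x m - y m\<bar> \<le> e / 3"
    using assms[of "e / 3"] by auto
  obtain M where M: "\<forall>m\<ge>M. \<forall>n\<ge>M. dist (y m) (y n) < e / 3"
    using metric_CauchyD[OF convergent_Cauchy[OF y(1)]] \<open>e > 0\<close> by (meson zero_less_divide_iff zero_less_numeral)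
  have "dist (x m) (x n) < e" if "m \<ge> M" "n \<ge> M" for m n
  proof -
    have "\<bar>x m - x n\<bar> \<le> \<bar>x m - y m\<bar> + \<bar>y m - y n\<bar> + \<bar>y n - x n\<bar>" by linarith
    also have "\<dots> < e / 3 + e / 3 + e / 3"
      using y(2)[of m] y(2)[of n] M[rule_format, OF that] by (simp add: dist_real_def abs_minus_commute)
    finally show ?thesis by (simp add: dist_real_def)
  qed
  then have "\<forall>m\<ge>M. \<forall>n\<ge>M. dist (x m) (x n) < e" by blast
  then show "\<exists>M. \<forall>m\<ge>M. \<forall>n\<ge>M. dist (x m) (x n) < e" ..
qed

text \<open>The \<open>j\<close>-th coefficient is read off at a small \<open>\<theta> > 0\<close> as
  \<open>((\<Sum>i. a m i * \<theta>^i) - (\<Sum>i<j. a m i * \<theta>^i)) / \<theta>^j\<close>, with an error of at most \<open>B * \<theta>\<close>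
  uniformly in \<open>m\<close>.\<close>
lemma convergent_power_series_coeffs:
  fixes a :: "nat \<Rightarrow> nat \<Rightarrow> real"
  assumes a0: "\<And>m j. 0 \<le> a m j" and summable: "\<And>m. summable (a m)"
    and bound: "\<And>m. (\<Sum>j. a m j) \<le> B"
    and conv: "\<And>\<theta>. \<theta> \<in> {-1..1} \<Longrightarrow> convergent (\<lambda>m. \<Sum>j. a m j * \<theta>^j)"
  shows "convergent (\<lambda>m. a m j)"
proof (induction j rule: less_induct)
  case (less j)
  show ?case
  proof (rule convergent_if_uniformly_approximable)
    fix e :: real assume e: "e > 0"
    have B: "0 \<le> B" using bound[of 0] a0 suminf_nonneg[OF summable] by (meson order_trans)
    define \<theta> where "\<theta> = min 1 (e / (B + 1))"
    have \<theta>: "0 < \<theta>" "\<theta> \<le> 1" "B * \<theta> \<le> e"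
      using e B by (auto simp: \<theta>_def min_def field_simps intro: order_trans[of _ "e * B / (B + 1)"])
    define y where "y m = ((\<Sum>i. a m i * \<theta>^i) - (\<Sum>i<j. a m i * \<theta>^i)) / \<theta>^j" for m
    have "convergent y"
    proof -
      obtain L where L: "(\<lambda>m. \<Sum>i. a m i * \<theta>^i) \<longlonglongrightarrow> L"
        using conv[of \<theta>] \<theta> by (auto simp: convergent_def)
      have "(\<lambda>m. a m i) \<longlonglongrightarrow> lim (\<lambda>m. a m i)" if "i < j" for i
        using less that convergent_LIMSEQ_iff by blast
      then have "y \<longlonglongrightarrow> (L - (\<Sum>i<j. lim (\<lambda>m. a m i) * \<theta>^i)) / \<theta>^j"
        unfolding y_def using \<theta> by (intro tendsto_intros L) auto
      then show ?thesis by (auto simp: convergent_def)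
    qed
    moreover have "\<bar>a m j - y m\<bar> \<le> e" for m
    proof -
      have "\<bar>(\<Sum>i. a m i * \<theta>^i) - (\<Sum>i<Suc j. a m i * \<theta>^i)\<bar> \<le> (\<Sum>i. a m i) * \<bar>\<theta>\<bar>^Suc j"
        using a0 summable \<theta> by (intro power_series_tail_le) auto
      also have "\<dots> \<le> B * \<theta>^Suc j"
        using bound[of m] \<theta> by (simp add: mult_right_mono)
      finally have "\<bar>(\<Sum>i. a m i * \<theta>^i) - (\<Sum>i<Suc j. a m i * \<theta>^i)\<bar> \<le> B * \<theta>^Suc j" .
      moreover have "(\<Sum>i. a m i * \<theta>^i) - (\<Sum>i<Suc j. a m i * \<theta>^i) = \<theta>^j * (y m - a m j)"
        using \<theta> by (simp add: y_def field_simps)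
      ultimately have "\<theta>^j * \<bar>a m j - y m\<bar> \<le> \<theta>^j * (B * \<theta>)"
        using \<theta> by (simp add: abs_mult abs_minus_commute mult_ac)
      then have "\<bar>a m j - y m\<bar> \<le> B * \<theta>" using \<theta> by (simp add: mult_le_cancel_left_pos)
      then show ?thesis using \<theta> by linarith
    qed
    ultimately show "\<exists>y. convergent y \<and> (\<forall>m. \<bar>a m j - y m\<bar> \<le> e)" by blast
  qed
qed

lemma sums_if_tail_le:
  fixes f :: "nat \<Rightarrow> real"
  assumes tail: "\<And>n. \<bar>s - (\<Sum>i<n. f i)\<bar> \<le> B * q^n" and q: "\<bar>q\<bar> < 1"
  shows "f sums s"
proof -
  have "(\<lambda>n. B * q^n) \<longlonglongrightarrow> 0" using q by (intro tendsto_mult_right_zero LIMSEQ_power_zero) simp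
  then have "(\<lambda>n. s - (\<Sum>i<n. f i)) \<longlonglongrightarrow> 0"
    by (rule Lim_null_comparison[rotated]) (use tail in \<open>simp add: always_eventually\<close>)
  from tendsto_diff[OF tendsto_const[of s] this] show ?thesis by (simp add: sums_def)
qed

lemma power_series_limit_coeffs:
  fixes a :: "nat \<Rightarrow> nat \<Rightarrow> real"
  assumes a0: "\<And>m j. 0 \<le> a m j" and summable: "\<And>m. summable (a m)"
    and bound: "\<And>m. (\<Sum>j. a m j) \<le> B"
    and lim: "\<And>\<theta>. \<theta> \<in> {-1..1} \<Longrightarrow> (\<lambda>m. \<Sum>j. a m j * \<theta>^j) \<longlonglongrightarrow> g \<theta>"
  obtains A where "\<And>j. 0 \<le> A j" "\<And>\<theta>. \<theta> \<in> {-1<..<1} \<Longrightarrow> (\<lambda>j. A j * \<theta>^j) sums g \<theta>"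
proof
  define A where "A j = lim (\<lambda>m. a m j)" for j
  have coeffs: "(\<lambda>m. a m j) \<longlonglongrightarrow> A j" for j
    unfolding A_def convergent_LIMSEQ_iff[symmetric]
    by (rule convergent_power_series_coeffs[OF a0 summable bound]) (use lim in \<open>auto simp: convergent_def\<close>)
  show "0 \<le> A j" for j using a0 coeffs by (meson LIMSEQ_le_const)
  fix \<theta> :: real assume \<theta>: "\<theta> \<in> {-1<..<1}"
  have "\<bar>g \<theta> - (\<Sum>i<n. A i * \<theta>^i)\<bar> \<le> B * \<bar>\<theta>\<bar>^n" for n
  proof (rule LIMSEQ_le_const2)
    show "(\<lambda>m. \<bar>(\<Sum>j. a m j * \<theta>^j) - (\<Sum>i<n. a m i * \<theta>^i)\<bar>) \<longlonglongrightarrow> \<bar>g \<theta> - (\<Sum>i<n. A i * \<theta>^i)\<bar>"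
      using \<theta> by (intro tendsto_intros lim coeffs) auto
    have "\<bar>(\<Sum>j. a m j * \<theta>^j) - (\<Sum>i<n. a m i * \<theta>^i)\<bar> \<le> (\<Sum>j. a m j) * \<bar>\<theta>\<bar>^n" for m
      using a0 summable \<theta> by (intro power_series_tail_le) auto
    moreover have "(\<Sum>j. a m j) * \<bar>\<theta>\<bar>^n \<le> B * \<bar>\<theta>\<bar>^n" for m
      by (rule mult_right_mono[OF bound]) simp
    ultimately have "\<bar>(\<Sum>j. a m j * \<theta>^j) - (\<Sum>i<n. a m i * \<theta>^i)\<bar> \<le> B * \<bar>\<theta>\<bar>^n" for m
      by (rule order_trans)
    then show "\<exists>N. \<forall>m\<ge>N. \<bar>(\<Sum>j. a m j * \<theta>^j) - (\<Sum>i<n. a m i * \<theta>^i)\<bar> \<le> B * \<bar>\<theta>\<bar>^n"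
      by blast
  qed
  then show "(\<lambda>j. A j * \<theta>^j) sums g \<theta>"
    by (rule sums_if_tail_le) (use \<theta> in auto)
qed

lemma nonneg_power_series_uniform_limit:
  assumes G: "\<And>m. nonneg_power_series (G m)"
    and lim: "uniform_limit {-1..1} G g sequentially"
  shows "nonneg_power_series g"
proof -
  have "\<forall>m. \<exists>a. (\<forall>j. 0 \<le> a j) \<and> summable a \<and> (\<forall>\<theta>\<in>{-1..1}. (\<lambda>j. a j * \<theta>^j) sums G m \<theta>)"
    using G unfolding nonneg_power_series_def by blast
  then obtain a where a0: "\<And>m j. 0 \<le> a m j" and summable: "\<And>m. summable (a m)"
    and sums: "\<And>m \<theta>. \<theta> \<in> {-1..1} \<Longrightarrow> (\<lambda>j. a m j * \<theta>^j) sums G m \<theta>"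
    by metis
  have G_eq: "G m \<theta> = (\<Sum>j. a m j * \<theta>^j)" if "\<theta> \<in> {-1..1}" for m \<theta>
    using sums[OF that] by (simp add: sums_iff)
  have pointwise: "(\<lambda>m. \<Sum>j. a m j * \<theta>^j) \<longlonglongrightarrow> g \<theta>" if "\<theta> \<in> {-1..1}" for \<theta>
    using tendsto_uniform_limitI[OF lim that] G_eq[OF that] by simp
  have "Bseq (\<lambda>m. \<Sum>j. a m j * 1^j)" by (rule convergent_imp_Bseq[OF convergentI[OF pointwise]]) simp
  then obtain B where B: "\<And>m. norm (\<Sum>j. a m j * 1^j) \<le> B" unfolding Bseq_def by blast
  have bound: "(\<Sum>j. a m j) \<le> B" for m
    using abs_ge_self[of "\<Sum>j. a m j"] B[of m] by simp
  obtain A where A0: "\<And>j. 0 \<le> A j" and A_sums: "\<And>\<theta>. \<theta> \<in> {-1<..<1} \<Longrightarrow> (\<lambda>j. A j * \<theta>^j) sums g \<theta>"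
    using power_series_limit_coeffs[OF a0 summable bound pointwise] by blast
  have "continuous_on {-1..1} g"
    by (rule uniform_limit_theorem[OF _ lim])
       (auto intro!: always_eventually nonneg_power_series_continuous_on G)
  from nonneg_power_seriesI_open[OF A0 A_sums this] show ?thesis .
qed

lemma nonneg_power_series_compose:
  assumes f: "nonneg_power_series f" and g: "nonneg_power_series g"
    and g_range: "\<And>\<theta>. \<theta> \<in> {-1..1} \<Longrightarrow> g \<theta> \<in> {-1..1}"
  shows "nonneg_power_series (\<lambda>\<theta>. f (g \<theta>))"
proof -
  obtain a where a0: "\<And>j. 0 \<le> a j" and summable: "summable a"
    and sums: "\<And>z. z \<in> {-1..1} \<Longrightarrow> (\<lambda>j. a j * z^j) sums f z"
    using f nonneg_power_seriesE by blast
  have "uniform_limit {-1..1} (\<lambda>n \<theta>. \<Sum>j<n. a j * g \<theta> ^ j) (\<lambda>\<theta>. \<Sum>j. a j * g \<theta> ^ j) sequentially"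
  proof (rule Weierstrass_m_test[OF _ summable])
    fix n and \<theta> :: real assume "\<theta> \<in> {-1..1}"
    then have "\<bar>g \<theta>\<bar> \<le> 1" using g_range by (auto simp: abs_le_iff)
    then show "norm (a n * g \<theta> ^ n) \<le> a n" using abs_coeff_power_le a0 by simp
  qed
  then have "nonneg_power_series (\<lambda>\<theta>. \<Sum>j. a j * g \<theta> ^ j)"
  proof (rule nonneg_power_series_uniform_limit[rotated])
    show "nonneg_power_series (\<lambda>\<theta>. \<Sum>j<n. a j * g \<theta> ^ j)" for n
      by (intro nonneg_power_series_sum nonneg_power_series_cmult[OF a0] nonneg_power_series_power[OF g])
  qed
  then show ?thesis
    by (rule nonneg_power_series_cong) (use sums g_range in \<open>auto simp: sums_iff\<close>)
qed

section \<open>The arcsine kernel\<close>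

definition arcsin_kernel :: "real \<Rightarrow> real" where
  "arcsin_kernel z = 2 / pi * (sqrt (1 - z\<^sup>2) + z * arcsin z)"

lemma rho_eq_arcsin_kernel:
  assumes "z \<in> {-1..1}"
  shows "rho cp cm z = (cp - cm)\<^sup>2 / 4 * (arcsin_kernel z - z)"
  using assms pi_gt_zero
  by (simp add: rho_def arcsin_kernel_def arccos_arcsin_eq field_simps)

lemma arcsin_kernel_one [simp]: "arcsin_kernel 1 = 1"
  by (simp add: arcsin_kernel_def)

lemma continuous_on_arcsin_kernel: "continuous_on {-1..1} arcsin_kernel"
  unfolding arcsin_kernel_def by (intro continuous_intros continuous_on_arcsin') auto

lemma arcsin_kernel_has_real_derivative:
  assumes "-1 < z" "z < 1"
  shows "(arcsin_kernel has_real_derivative 2 / pi * arcsin z) (at z)"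
proof -
  have "sqrt (1 - z\<^sup>2) > 0" using assms by (simp add: abs_square_less_1)
  then have "((\<lambda>z. sqrt (1 - z\<^sup>2) + z * arcsin z) has_real_derivative arcsin z) (at z)"
    using assms by (auto intro!: derivative_eq_intros simp: field_simps)
  then show ?thesis unfolding arcsin_kernel_def[abs_def] by (rule DERIV_cmult)
qed

lemma arcsin_kernel_lipschitz:
  assumes "z \<in> {-1..1}" "w \<in> {-1..1}"
  shows "\<bar>arcsin_kernel z - arcsin_kernel w\<bar> \<le> \<bar>z - w\<bar>"
proof -
  have ordered: "\<bar>arcsin_kernel b - arcsin_kernel a\<bar> \<le> b - a"
    if ab: "a < b" "a \<in> {-1..1}" "b \<in> {-1..1}" for a b
  proof -
    have "continuous_on {a..b} arcsin_kernel"
      using ab by (intro continuous_on_subset[OF continuous_on_arcsin_kernel]) auto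
    moreover have "arcsin_kernel differentiable (at x)" if "a < x" "x < b" for x
      using arcsin_kernel_has_real_derivative[of x] that ab by (auto simp: real_differentiable_def)
    ultimately obtain l x where x: "a < x" "x < b" "DERIV arcsin_kernel x :> l"
      "arcsin_kernel b - arcsin_kernel a = (b - a) * l"
      using MVT[OF ab(1)] by blast
    have "l = 2 / pi * arcsin x"
      using x ab by (intro DERIV_unique[OF x(3) arcsin_kernel_has_real_derivative]) auto
    then have "\<bar>l\<bar> = 2 / pi * \<bar>arcsin x\<bar>" by (simp add: abs_mult)
    also have "\<dots> \<le> 2 / pi * (pi / 2)"
      using arcsin_bounded[of x] x ab by (intro mult_left_mono) (auto simp: abs_le_iff)
    finally have "\<bar>l\<bar> \<le> 1" by simp
    then show ?thesis using x(4) ab by (simp add: abs_mult mult_left_le)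
  qed
  show ?thesis
    using ordered[of z w] ordered[of w z] assms
    by (cases z w rule: linorder_cases) (auto simp: abs_minus_commute)
qed

text \<open>Coefficients of the binomial series of \<open>(1 - t\<^sup>2) powr (-1/2)\<close>.\<close>
definition inv_sqrt_coeff :: "nat \<Rightarrow> real" where
  "inv_sqrt_coeff n = (if even n then (-1)^(n div 2) * ((-(1/2)) gchoose (n div 2)) else 0)"

lemma inv_sqrt_coeff_nonneg: "0 \<le> inv_sqrt_coeff n"
proof -
  have "(-1)^k * ((-(1/2)) gchoose k) = (real k - 1/2) gchoose k" for k
    unfolding gbinomial_minus by (simp add: algebra_simps)
  moreover have "0 \<le> (real k - 1/2) gchoose k" for k
    unfolding gbinomial_prod_rev by (intro divide_nonneg_pos prod_nonneg) auto
  ultimately show ?thesis by (simp add: inv_sqrt_coeff_def)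
qed

lemma inv_sqrt_coeff_sums:
  assumes "\<bar>t\<bar> < 1"
  shows "(\<lambda>n. inv_sqrt_coeff n * t^n) sums inverse (sqrt (1 - t\<^sup>2))"
proof -
  have t2: "\<bar>-(t\<^sup>2)\<bar> < 1" using assms by (simp add: abs_square_less_1)
  have "(\<lambda>k. ((-(1/2)) gchoose k) * (-(t\<^sup>2))^k) sums (1 + -(t\<^sup>2)) powr (-(1/2))"
    by (rule gen_binomial_real[OF t2])
  moreover have "((-(1/2)) gchoose k) * (-(t\<^sup>2))^k = inv_sqrt_coeff (2 * k) * t^(2 * k)" for k
    by (simp add: inv_sqrt_coeff_def power_mult power_minus')
  moreover have "(1 + -(t\<^sup>2)) powr (-(1/2)) = inverse (sqrt (1 - t\<^sup>2))"
    using t2 by (simp add: powr_minus powr_half_sqrt)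
  ultimately have "(\<lambda>k. inv_sqrt_coeff (2 * k) * t^(2 * k)) sums inverse (sqrt (1 - t\<^sup>2))"
    by simp
  moreover have "inv_sqrt_coeff n * t^n = 0" if "n \<notin> range (\<lambda>k. 2 * k)" for n
    using that by (auto simp: inv_sqrt_coeff_def elim!: evenE)
  ultimately show ?thesis
    using sums_mono_reindex[of "\<lambda>k. 2 * k" "\<lambda>n. inv_sqrt_coeff n * t^n"] by (auto simp: strict_mono_def)
qed

text \<open>Twice-integrated \<open>inv_sqrt_coeff\<close>, scaled so that the series at \<open>0\<close> starts with
  \<open>arcsin_kernel 0 = 2 / pi\<close>.\<close>
definition arcsin_kernel_coeff :: "nat \<Rightarrow> real" where
  "arcsin_kernel_coeff n = 2 / pi *
     (if n = 0 then 1 else if n = 1 then 0 else inv_sqrt_coeff (n - 2) / (real (n - 1) * real n))"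

lemma arcsin_kernel_coeff_nonneg: "0 \<le> arcsin_kernel_coeff n"
  by (simp add: arcsin_kernel_coeff_def inv_sqrt_coeff_nonneg)

lemma diffs_diffs_arcsin_kernel_coeff:
  "diffs (diffs arcsin_kernel_coeff) n = 2 / pi * inv_sqrt_coeff n"
proof -
  have "diffs (diffs arcsin_kernel_coeff) n
      = real (Suc n) * real (Suc (Suc n)) * arcsin_kernel_coeff (Suc (Suc n))"
    by (simp add: diffs_def)
  also have "\<dots> = 2 / pi * inv_sqrt_coeff n"
    by (simp add: arcsin_kernel_coeff_def field_simps del: of_nat_Suc)
  finally show ?thesis .
qed

lemma summable_arcsin_kernel_coeff:
  assumes "\<bar>t\<bar> < 1"
  shows "summable (\<lambda>n. arcsin_kernel_coeff n * t^n)"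
proof -
  have "summable (\<lambda>n. 2 / pi * inv_sqrt_coeff n * \<bar>t\<bar>^n)"
    using inv_sqrt_coeff_sums[of "\<bar>t\<bar>"] assms by (auto simp: sums_iff mult.assoc intro: summable_mult)
  then have "summable (\<lambda>n. arcsin_kernel_coeff (n + 2) * t^(n + 2))"
  proof (rule summable_comparison_test')
    fix n :: nat
    have "1 \<le> real (n + 1) * real (n + 2)"
      using mult_mono[of 1 "real (n + 1)" 1 "real (n + 2)"] by simp
    then have "inv_sqrt_coeff n / (real (n + 1) * real (n + 2)) \<le> inv_sqrt_coeff n"
      using divide_left_mono[of 1 _ "inv_sqrt_coeff n"] inv_sqrt_coeff_nonneg[of n] by force
    then have "2 / pi * (inv_sqrt_coeff n / (real (n + 1) * real (n + 2))) \<le> 2 / pi * inv_sqrt_coeff n"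
      by (intro mult_left_mono) auto
    then have "arcsin_kernel_coeff (n + 2) \<le> 2 / pi * inv_sqrt_coeff n"
      by (simp add: arcsin_kernel_coeff_def)
    moreover have "\<bar>t\<bar>^(n + 2) \<le> \<bar>t\<bar>^n" using assms by (intro power_decreasing) auto
    ultimately have "arcsin_kernel_coeff (n + 2) * \<bar>t\<bar>^(n + 2) \<le> 2 / pi * inv_sqrt_coeff n * \<bar>t\<bar>^n"
      using arcsin_kernel_coeff_nonneg[of "n + 2"] by (intro mult_mono) auto
    then show "norm (arcsin_kernel_coeff (n + 2) * t^(n + 2)) \<le> 2 / pi * inv_sqrt_coeff n * \<bar>t\<bar>^n"
      using arcsin_kernel_coeff_nonneg[of "n + 2"] by (simp add: abs_mult power_abs)
  qed
  then show ?thesis by (subst summable_iff_shift[symmetric, of _ 2])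
qed

lemma arcsin_kernel_series_derivatives:
  assumes x: "x \<in> {-1<..<1}"
  shows "((\<lambda>x. \<Sum>n. arcsin_kernel_coeff n * x^n) has_real_derivative
           (\<Sum>n. diffs arcsin_kernel_coeff n * x^n)) (at x)"
    and "((\<lambda>x. \<Sum>n. diffs arcsin_kernel_coeff n * x^n) has_real_derivative
           2 / pi * inverse (sqrt (1 - x\<^sup>2))) (at x)"
proof -
  define K where "K = (1 + \<bar>x\<bar>) / 2"
  have K: "\<bar>K\<bar> < 1" "norm x < norm K" using x by (auto simp: K_def)
  have summable': "summable (\<lambda>n. diffs arcsin_kernel_coeff n * K^n)"
    using K by (intro termdiff_converges[where K = 1] summable_arcsin_kernel_coeff) auto
  show "((\<lambda>x. \<Sum>n. arcsin_kernel_coeff n * x^n) has_real_derivative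
      (\<Sum>n. diffs arcsin_kernel_coeff n * x^n)) (at x)"
    by (rule termdiffs_strong[OF summable_arcsin_kernel_coeff K(2)]) fact
  have "(\<lambda>n. 2 / pi * (inv_sqrt_coeff n * x^n)) sums (2 / pi * inverse (sqrt (1 - x\<^sup>2)))"
    using x by (intro sums_mult inv_sqrt_coeff_sums) auto
  then have "(\<Sum>n. diffs (diffs arcsin_kernel_coeff) n * x^n) = 2 / pi * inverse (sqrt (1 - x\<^sup>2))"
    unfolding diffs_diffs_arcsin_kernel_coeff by (simp add: mult.assoc sums_iff)
  then show "((\<lambda>x. \<Sum>n. diffs arcsin_kernel_coeff n * x^n) has_real_derivative
      2 / pi * inverse (sqrt (1 - x\<^sup>2))) (at x)"
    using termdiffs_strong[OF summable' K(2)] by simp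
qed

lemma eq_if_has_real_derivative_eq:
  fixes f g :: "real \<Rightarrow> real"
  assumes S: "convex S" "a \<in> S" "x \<in> S" and "f a = g a"
    and f: "\<And>x. x \<in> S \<Longrightarrow> (f has_real_derivative D x) (at x within S)"
    and g: "\<And>x. x \<in> S \<Longrightarrow> (g has_real_derivative D x) (at x within S)"
  shows "f x = g x"
proof -
  have "\<exists>c. \<forall>x\<in>S. f x - g x = c"
    using DERIV_diff[OF f g] by (intro has_field_derivative_zero_constant[OF S(1)]) simp
  then obtain c where "\<And>x. x \<in> S \<Longrightarrow> f x - g x = c" by blast
  then have "f x - g x = f a - g a" using S(2,3) by simp
  with \<open>f a = g a\<close> show ?thesis by simp
qed

lemma arcsin_kernel_sums:
  assumes t: "t \<in> {-1<..<1}"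
  shows "(\<lambda>n. arcsin_kernel_coeff n * t^n) sums arcsin_kernel t"
proof -
  have zero: "(0::real) \<in> {-1<..<1}" by simp
  have H': "(\<Sum>n. diffs arcsin_kernel_coeff n * x^n) = 2 / pi * arcsin x" if "x \<in> {-1<..<1}" for x
  proof (rule eq_if_has_real_derivative_eq[OF _ zero that])
    show "(\<Sum>n. diffs arcsin_kernel_coeff n * 0^n) = 2 / pi * arcsin 0"
      unfolding powser_zero by (simp add: diffs_def arcsin_kernel_coeff_def)
    show "((\<lambda>x. 2 / pi * arcsin x) has_real_derivative 2 / pi * inverse (sqrt (1 - y\<^sup>2)))
        (at y within {-1<..<1})" if "y \<in> {-1<..<1}" for y
      using that by (intro has_field_derivative_at_within[OF DERIV_cmult[OF DERIV_arcsin]]) auto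
    show "((\<lambda>x. \<Sum>n. diffs arcsin_kernel_coeff n * x^n) has_real_derivative
        2 / pi * inverse (sqrt (1 - y\<^sup>2))) (at y within {-1<..<1})" if "y \<in> {-1<..<1}" for y
      using arcsin_kernel_series_derivatives(2)[OF that] by (rule has_field_derivative_at_within)
  qed simp
  have "arcsin_kernel t = (\<Sum>n. arcsin_kernel_coeff n * t^n)"
  proof (rule eq_if_has_real_derivative_eq[OF _ zero t])
    show "arcsin_kernel 0 = (\<Sum>n. arcsin_kernel_coeff n * 0^n)"
      unfolding powser_zero by (simp add: arcsin_kernel_def arcsin_kernel_coeff_def)
    show "(arcsin_kernel has_real_derivative 2 / pi * arcsin y) (at y within {-1<..<1})"
      if "y \<in> {-1<..<1}" for y
      using that by (intro has_field_derivative_at_within[OF arcsin_kernel_has_real_derivative]) auto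
    show "((\<lambda>x. \<Sum>n. arcsin_kernel_coeff n * x^n) has_real_derivative 2 / pi * arcsin y)
        (at y within {-1<..<1})" if "y \<in> {-1<..<1}" for y
      using arcsin_kernel_series_derivatives(1)[OF that] unfolding H'[OF that]
      by (rule has_field_derivative_at_within)
  qed simp
  then show ?thesis
    using summable_arcsin_kernel_coeff[of t] t by (simp add: abs_less_iff summable_sums)
qed

lemma nonneg_power_series_arcsin_kernel: "nonneg_power_series arcsin_kernel"
  by (rule nonneg_power_seriesI_open[OF arcsin_kernel_coeff_nonneg arcsin_kernel_sums
        continuous_on_arcsin_kernel])

lemma arcsin_kernel_range:
  assumes "z \<in> {-1..1}"
  shows "arcsin_kernel z \<in> {-1..1}"
  using nonneg_power_series_bound[OF nonneg_power_series_arcsin_kernel assms] by (auto simp: abs_le_iff)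

section \<open>The relaxation flow\<close>

lemma integral_exp_weight:
  fixes l t :: real
  assumes "0 \<le> t"
  shows "integral {0..t} (\<lambda>s. l * exp (l * s)) = exp (l * t) - 1"
proof -
  have "((\<lambda>s. l * exp (l * s)) has_integral (exp (l * t) - exp (l * 0))) {0..t}"
    using assms
    by (intro fundamental_theorem_of_calculus)
       (auto intro!: derivative_eq_intros simp: has_real_derivative_iff_has_vector_derivative[symmetric])
  then have "((\<lambda>s. l * exp (l * s)) has_integral (exp (l * t) - 1)) {0..t}" by simp
  then show ?thesis by (rule integral_unique)
qed

lemma integral_power_weight:
  fixes l t :: real
  assumes "0 \<le> t"
  shows "integral {0..t} (\<lambda>s. l * ((l * s)^m / fact m)) = (l * t)^Suc m / fact (Suc m)"
proof -
  have "((\<lambda>s. l * ((l * s)^m / fact m)) has_integral ((l * t)^Suc m / fact (Suc m) - (l * 0)^Suc m / fact (Suc m))) {0..t}"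
  proof (rule fundamental_theorem_of_calculus[OF assms])
    fix x :: real assume "x \<in> {0..t}"
    have "((\<lambda>s. (l * s)^Suc m / fact (Suc m)) has_real_derivative
            real (Suc m) * (l * x)^m * l / fact (Suc m)) (at x within {0..t})"
      by (auto intro!: derivative_eq_intros simp del: power_Suc)
    also have "real (Suc m) * (l * x)^m * l / fact (Suc m) = l * ((l * x)^m / fact m)"
      by (simp add: fact_Suc field_simps del: of_nat_Suc)
    finally show "((\<lambda>s. (l * s)^Suc m / fact (Suc m)) has_vector_derivative l * ((l * x)^m / fact m))
        (at x within {0..t})"
      by (simp add: has_real_derivative_iff_has_vector_derivative)
  qed
  moreover have "(l * t)^Suc m / fact (Suc m) - (l * 0)^Suc m / fact (Suc m) = (l * t)^Suc m / fact (Suc m)"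
    by simp
  ultimately show ?thesis by (metis integral_unique)
qed

lemma abs_nonneg_comb_le:
  fixes a b x y :: real
  assumes "0 \<le> a" "0 \<le> b"
  shows "\<bar>a * x + b * y\<bar> \<le> a * \<bar>x\<bar> + b * \<bar>y\<bar>"
  using abs_triangle_ineq[of "a * x" "b * y"] assms by (simp add: abs_mult)

locale relaxation_flow =
  fixes J :: "real \<Rightarrow> real" and l :: real
  assumes rate_nonneg: "0 \<le> l"
    and J_range: "\<And>z. z \<in> {-1..1} \<Longrightarrow> J z \<in> {-1..1}"
    and J_lipschitz: "\<And>z w. z \<in> {-1..1} \<Longrightarrow> w \<in> {-1..1} \<Longrightarrow> \<bar>J z - J w\<bar> \<le> \<bar>z - w\<bar>"
begin

lemma continuous_on_J: "continuous_on {-1..1} J"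
proof -
  have "1-lipschitz_on {-1..1} J" by (rule lipschitz_onI) (auto simp: dist_real_def J_lipschitz)
  then show ?thesis by (rule lipschitz_on_continuous_on)
qed

definition admissible :: "(real \<Rightarrow> real) \<Rightarrow> bool" where
  "admissible y \<longleftrightarrow> (\<forall>T. continuous_on {0..T} y) \<and> (\<forall>t\<ge>0. y t \<in> {-1..1})"

lemma admissible_const: "\<theta> \<in> {-1..1} \<Longrightarrow> admissible (\<lambda>_. \<theta>)"
  by (simp add: admissible_def)

lemma integrable_weighted_J:
  assumes "admissible y"
  shows "(\<lambda>s. l * exp (l * s) * J (y s)) integrable_on {0..t}"
proof -
  have "continuous_on {0..t} (\<lambda>s. J (y s))"
    using assms by (intro continuous_on_compose2[OF continuous_on_J]) (auto simp: admissible_def)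
  then show ?thesis by (intro integrable_continuous_interval continuous_intros)
qed

text \<open>The integral form of \<open>\<theta>' = l (J \<theta> - \<theta>)\<close> after multiplying by the integrating factor
  \<open>exp (l t)\<close>. Its value is a convex combination of \<open>\<theta>\<close> and values of \<open>J\<close>, so it stays in
  \<open>[-1, 1]\<close>, where \<open>J\<close> is defined and Lipschitz.\<close>
definition picard_step :: "real \<Rightarrow> (real \<Rightarrow> real) \<Rightarrow> real \<Rightarrow> real" where
  "picard_step \<theta> y t = exp (-(l * t)) * (\<theta> + integral {0..t} (\<lambda>s. l * exp (l * s) * J (y s)))"

lemma picard_step_range:
  assumes y: "admissible y" and \<theta>: "\<theta> \<in> {-1..1}" and t: "0 \<le> t"
  shows "picard_step \<theta> y t \<in> {-1..1}"
proof -
  have "norm (integral {0..t} (\<lambda>s. l * exp (l * s) * J (y s))) \<le> integral {0..t} (\<lambda>s. l * exp (l * s))"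
  proof (rule integral_norm_bound_integral[OF integrable_weighted_J[OF y]])
    show "(\<lambda>s. l * exp (l * s)) integrable_on {0..t}"
      by (intro integrable_continuous_interval continuous_intros)
    fix s assume "s \<in> {0..t}"
    then have "\<bar>J (y s)\<bar> \<le> 1" using y J_range by (force simp: admissible_def abs_le_iff)
    then show "norm (l * exp (l * s) * J (y s)) \<le> l * exp (l * s)"
      using rate_nonneg by (simp add: abs_mult mult_left_le)
  qed
  then have "\<bar>\<theta> + integral {0..t} (\<lambda>s. l * exp (l * s) * J (y s))\<bar> \<le> exp (l * t)"
    using \<theta> integral_exp_weight[OF t, of l] by (auto simp: abs_le_iff)
  then have "\<bar>picard_step \<theta> y t\<bar> \<le> exp (-(l * t)) * exp (l * t)"
    unfolding picard_step_def by (simp add: abs_mult)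
  then show ?thesis by (simp add: exp_minus abs_le_iff)
qed

lemma admissible_picard_step:
  assumes y: "admissible y" and \<theta>: "\<theta> \<in> {-1..1}"
  shows "admissible (picard_step \<theta> y)"
  unfolding admissible_def
proof (intro conjI allI impI picard_step_range[OF y \<theta>])
  fix T :: real
  have "continuous_on {0..T} (\<lambda>t. integral {0..t} (\<lambda>s. l * exp (l * s) * J (y s)))"
    by (rule indefinite_integral_continuous_1[OF integrable_weighted_J[OF y]])
  then show "continuous_on {0..T} (picard_step \<theta> y)"
    unfolding picard_step_def by (intro continuous_intros)
qed

lemma picard_step_diff:
  assumes y: "admissible y" and z: "admissible z"
  shows "picard_step \<theta> y t - picard_step \<theta> z t
    = integral {0..t} (\<lambda>s. l * exp (l * (s - t)) * (J (y s) - J (z s)))"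
proof -
  have "picard_step \<theta> y t - picard_step \<theta> z t = exp (-(l * t)) *
      (integral {0..t} (\<lambda>s. l * exp (l * s) * J (y s)) - integral {0..t} (\<lambda>s. l * exp (l * s) * J (z s)))"
    by (simp add: picard_step_def algebra_simps)
  also have "\<dots> = integral {0..t} (\<lambda>s. exp (-(l * t)) * (l * exp (l * s) * J (y s) - l * exp (l * s) * J (z s)))"
    by (simp add: integral_diff[OF integrable_weighted_J[OF y] integrable_weighted_J[OF z]])
  also have "\<dots> = integral {0..t} (\<lambda>s. l * exp (l * (s - t)) * (J (y s) - J (z s)))"
    by (simp add: exp_diff exp_minus right_diff_distrib algebra_simps divide_inverse)
  finally show ?thesis .
qed

lemma picard_step_dist:
  assumes y: "admissible y" and z: "admissible z" and t: "0 \<le> t"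
  shows "\<bar>picard_step \<theta> y t - picard_step \<theta> z t\<bar> \<le> integral {0..t} (\<lambda>s. l * \<bar>y s - z s\<bar>)"
proof -
  have "norm (integral {0..t} (\<lambda>s. l * exp (l * (s - t)) * (J (y s) - J (z s))))
      \<le> integral {0..t} (\<lambda>s. l * \<bar>y s - z s\<bar>)"
  proof (rule integral_norm_bound_integral)
    have cont: "continuous_on {0..t} y" "continuous_on {0..t} z"
      using y z by (auto simp: admissible_def)
    then show "(\<lambda>s. l * \<bar>y s - z s\<bar>) integrable_on {0..t}"
      by (intro integrable_continuous_interval continuous_intros)
    have "continuous_on {0..t} (\<lambda>s. J (y s))" "continuous_on {0..t} (\<lambda>s. J (z s))"
      using y z by (auto intro!: continuous_on_compose2[OF continuous_on_J] simp: admissible_def)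
    then show "(\<lambda>s. l * exp (l * (s - t)) * (J (y s) - J (z s))) integrable_on {0..t}"
      by (intro integrable_continuous_interval continuous_intros)
    fix s assume s: "s \<in> {0..t}"
    then have "\<bar>J (y s) - J (z s)\<bar> \<le> \<bar>y s - z s\<bar>"
      using y z by (intro J_lipschitz) (auto simp: admissible_def)
    moreover have "exp (l * (s - t)) \<le> 1" using s rate_nonneg by (simp add: mult_nonneg_nonpos)
    ultimately have "exp (l * (s - t)) * \<bar>J (y s) - J (z s)\<bar> \<le> 1 * \<bar>y s - z s\<bar>"
      by (intro mult_mono) auto
    then show "norm (l * exp (l * (s - t)) * (J (y s) - J (z s))) \<le> l * \<bar>y s - z s\<bar>"
      using rate_nonneg by (simp add: abs_mult mult.assoc mult_left_mono)
  qed
  then show ?thesis unfolding picard_step_diff[OF y z] by simp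
qed

primrec picard :: "real \<Rightarrow> nat \<Rightarrow> real \<Rightarrow> real" where
  "picard \<theta> 0 = (\<lambda>_. \<theta>)"
| "picard \<theta> (Suc m) = picard_step \<theta> (picard \<theta> m)"

lemma admissible_picard:
  assumes "\<theta> \<in> {-1..1}"
  shows "admissible (picard \<theta> m)"
proof (induction m)
  case 0
  show ?case using admissible_const[OF assms] by simp
next
  case (Suc m)
  show ?case unfolding picard.simps(2) by (rule admissible_picard_step[OF Suc.IH assms])
qed

lemma picard_zero_time: "picard \<theta> m 0 = \<theta>"
  by (cases m) (simp_all add: picard_step_def)

lemma picard_diff_le:
  assumes \<theta>: "\<theta> \<in> {-1..1}"
  shows "0 \<le> t \<Longrightarrow> \<bar>picard \<theta> (Suc m) t - picard \<theta> m t\<bar> \<le> 2 * ((l * t)^m / fact m)"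
proof (induction m arbitrary: t)
  case 0
  then show ?case
    using admissible_picard[OF \<theta>, of 1] \<theta> by (auto simp: admissible_def abs_le_iff)
next
  case (Suc m)
  have "\<bar>picard \<theta> (Suc (Suc m)) t - picard \<theta> (Suc m) t\<bar>
      \<le> integral {0..t} (\<lambda>s. l * \<bar>picard \<theta> (Suc m) s - picard \<theta> m s\<bar>)"
    using picard_step_dist[OF admissible_picard[OF \<theta>, of "Suc m"] admissible_picard[OF \<theta>, of m]
        Suc.prems, of \<theta>]
    by (simp only: picard.simps(2))
  also have "\<dots> \<le> integral {0..t} (\<lambda>s. 2 * (l * ((l * s)^m / fact m)))"
  proof (rule integral_le)
    show "(\<lambda>s. l * \<bar>picard \<theta> (Suc m) s - picard \<theta> m s\<bar>) integrable_on {0..t}"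
      using admissible_picard[OF \<theta>] unfolding admissible_def
      by (intro integrable_continuous_interval continuous_intros) blast+
    show "(\<lambda>s. 2 * (l * ((l * s)^m / fact m))) integrable_on {0..t}"
      by (intro integrable_continuous_interval continuous_intros) auto
    fix s assume "s \<in> {0..t}"
    then show "l * \<bar>picard \<theta> (Suc m) s - picard \<theta> m s\<bar> \<le> 2 * (l * ((l * s)^m / fact m))"
      using mult_left_mono[OF Suc.IH[of s] rate_nonneg] by (simp add: mult.left_commute)
  qed
  also have "\<dots> = 2 * ((l * t)^Suc m / fact (Suc m))"
    unfolding integral_mult_right[where c = 2] integral_power_weight[OF Suc.prems] ..
  finally show ?case .
qed

definition flow :: "real \<Rightarrow> real \<Rightarrow> real" where
  "flow \<theta> t = \<theta> + (\<Sum>m. picard \<theta> (Suc m) t - picard \<theta> m t)"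

lemma uniform_limit_picard:
  assumes \<theta>: "\<theta> \<in> {-1..1}"
  shows "uniform_limit {0..T} (picard \<theta>) (flow \<theta>) sequentially"
proof -
  have "uniform_limit {0..T} (\<lambda>n t. \<Sum>m<n. picard \<theta> (Suc m) t - picard \<theta> m t)
          (\<lambda>t. \<Sum>m. picard \<theta> (Suc m) t - picard \<theta> m t) sequentially"
  proof (rule Weierstrass_m_test)
    fix m and t :: real assume "t \<in> {0..T}"
    then have "norm (picard \<theta> (Suc m) t - picard \<theta> m t) \<le> 2 * ((l * t)^m / fact m)"
      using picard_diff_le[OF \<theta>] by simp
    also have "\<dots> \<le> 2 * ((l * T)^m / fact m)"
      using \<open>t \<in> {0..T}\<close> rate_nonneg
      by (intro mult_left_mono divide_right_mono power_mono mult_left_mono) auto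
    finally show "norm (picard \<theta> (Suc m) t - picard \<theta> m t) \<le> 2 * ((l * T)^m / fact m)" .
  next
    show "summable (\<lambda>m. 2 * ((l * T)^m / fact m))"
      using summable_exp[of "l * T"] by (intro summable_mult) (simp add: field_simps)
  qed
  then have "uniform_limit {0..T} (\<lambda>n t. \<theta> + (\<Sum>m<n. picard \<theta> (Suc m) t - picard \<theta> m t)) (flow \<theta>) sequentially"
    unfolding flow_def[abs_def] by (intro uniform_limit_add uniform_limit_const)
  moreover have "\<theta> + (\<Sum>m<n. picard \<theta> (Suc m) t - picard \<theta> m t) = picard \<theta> n t" for n t
    using sum_lessThan_telescope[of "\<lambda>m. picard \<theta> m t" n] by (simp del: picard.simps(2))
  ultimately show ?thesis by simp
qed

lemma picard_tendsto_flow: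
  assumes "\<theta> \<in> {-1..1}" "0 \<le> t"
  shows "(\<lambda>n. picard \<theta> n t) \<longlonglongrightarrow> flow \<theta> t"
  using tendsto_uniform_limitI[OF uniform_limit_picard[OF assms(1), of t]] assms(2) by simp

lemma admissible_flow:
  assumes \<theta>: "\<theta> \<in> {-1..1}"
  shows "admissible (flow \<theta>)"
  unfolding admissible_def
proof (intro conjI allI impI)
  show "continuous_on {0..T} (flow \<theta>)" for T
    using admissible_picard[OF \<theta>]
    by (intro uniform_limit_theorem[OF _ uniform_limit_picard[OF \<theta>]])
       (auto simp: admissible_def intro: always_eventually)
  show "flow \<theta> t \<in> {-1..1}" if "0 \<le> t" for t
    using admissible_picard[OF \<theta>] that
    by (intro closed_sequentially[OF closed_atLeastAtMost _ picard_tendsto_flow[OF \<theta> that]])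
       (auto simp: admissible_def)
qed

lemma flow_zero_time: "flow \<theta> 0 = \<theta>"
  by (simp add: flow_def picard_zero_time del: picard.simps(2))

lemma flow_one:
  assumes "J 1 = 1" "0 \<le> t"
  shows "flow 1 t = 1"
proof -
  have "picard 1 m t = 1" if "0 \<le> t" for m t
    using that
  proof (induction m arbitrary: t)
    case (Suc m)
    then have "integral {0..t} (\<lambda>s. l * exp (l * s) * J (picard 1 m s)) = exp (l * t) - 1"
      using integral_exp_weight[OF Suc.prems, of l] assms(1)
      by (metis (no_types, lifting) atLeastAtMost_iff integral_cong mult.right_neutral)
    then show ?case by (simp add: picard_step_def exp_minus field_simps)
  qed simp
  then show ?thesis using assms(2) by (simp add: flow_def del: picard.simps(2))
qed

lemma flow_fixed_point:
  assumes \<theta>: "\<theta> \<in> {-1..1}" and t: "0 \<le> t"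
  shows "flow \<theta> t = picard_step \<theta> (flow \<theta>) t"
proof (rule LIMSEQ_unique)
  show "(\<lambda>n. picard \<theta> (Suc n) t) \<longlonglongrightarrow> flow \<theta> t"
    using picard_tendsto_flow[OF \<theta> t] by (rule LIMSEQ_Suc)
  show "(\<lambda>n. picard \<theta> (Suc n) t) \<longlonglongrightarrow> picard_step \<theta> (flow \<theta>) t"
  proof (rule LIMSEQ_I)
    fix e :: real assume e: "0 < e"
    define \<delta> where "\<delta> = e / (l * t + 1)"
    have "0 < l * t + 1" using add_nonneg_pos[OF mult_nonneg_nonneg[OF rate_nonneg t] zero_less_one] .
    then have \<delta>: "0 < \<delta>" "l * t * \<delta> < e"
      using e by (simp_all add: \<delta>_def field_simps)
    obtain N where N: "\<And>n s. n \<ge> N \<Longrightarrow> s \<in> {0..t} \<Longrightarrow> \<bar>picard \<theta> n s - flow \<theta> s\<bar> < \<delta>"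
      using uniform_limit_picard[OF \<theta>, of t] \<delta>(1)
      unfolding uniform_limit_sequentially_iff dist_real_def by meson
    have "\<bar>picard \<theta> (Suc n) t - picard_step \<theta> (flow \<theta>) t\<bar> < e" if "n \<ge> N" for n
    proof -
      have "\<bar>picard \<theta> (Suc n) t - picard_step \<theta> (flow \<theta>) t\<bar>
          \<le> integral {0..t} (\<lambda>s. l * \<bar>picard \<theta> n s - flow \<theta> s\<bar>)"
        unfolding picard.simps(2) by (rule picard_step_dist[OF admissible_picard[OF \<theta>] admissible_flow[OF \<theta>] t])
      also have "\<dots> \<le> integral {0..t} (\<lambda>s. l * \<delta>)"
        using N[OF that] rate_nonneg admissible_picard[OF \<theta>, of n] admissible_flow[OF \<theta>]
        by (intro integral_le integrable_continuous_interval continuous_intros mult_left_mono)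
           (auto simp: admissible_def less_imp_le)
      also have "\<dots> < e" using \<delta> t by (simp add: mult.commute mult.left_commute)
      finally show ?thesis .
    qed
    then show "\<exists>N. \<forall>n\<ge>N. norm (picard \<theta> (Suc n) t - picard_step \<theta> (flow \<theta>) t) < e" by auto
  qed
qed

lemma flow_has_real_derivative:
  assumes \<theta>: "\<theta> \<in> {-1..1}" and c: "0 \<le> c"
  shows "(flow \<theta> has_real_derivative l * (J (flow \<theta> c) - flow \<theta> c)) (at c within {0..})"
proof -
  define w where "w s = l * exp (l * s) * J (flow \<theta> s)" for s
  have w: "continuous_on {0..c + 1} w"
    using admissible_flow[OF \<theta>] unfolding w_def admissible_def
    by (intro continuous_intros continuous_on_compose2[OF continuous_on_J]) auto
  have "((\<lambda>u. exp (-(l * u)) * (\<theta> + integral {0..u} w)) has_real_derivative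
          exp (-(l * c)) * (-l) * (\<theta> + integral {0..c} w) + w c * exp (-(l * c))) (at c within {0..c + 1})"
    using c by (auto intro!: derivative_eq_intros integral_has_real_derivative[OF w])
  also have "exp (-(l * c)) * (-l) * (\<theta> + integral {0..c} w) + w c * exp (-(l * c))
      = l * (J (flow \<theta> c) - flow \<theta> c)"
  proof -
    have "flow \<theta> c = exp (-(l * c)) * (\<theta> + integral {0..c} w)"
      using flow_fixed_point[OF \<theta> c] unfolding picard_step_def w_def .
    moreover have "w c * exp (-(l * c)) = l * J (flow \<theta> c)"
      by (simp add: w_def exp_minus)
    ultimately show ?thesis by (simp add: algebra_simps)
  qed
  also have "at c within {0..c + 1} = at c within {0..}"
    by (rule at_within_nhd[where S = "{c - 1<..<c + 1}"]) auto
  finally show ?thesis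
    by (rule has_field_derivative_transform_within[OF _ zero_less_one])
       (use c flow_fixed_point[OF \<theta>] in \<open>auto simp: picard_step_def w_def\<close>)
qed

lemma drift_bound:
  assumes "z \<in> {-1..1}"
  shows "\<bar>l * (J z - z)\<bar> \<le> 2 * l"
proof -
  have "\<bar>J z - z\<bar> \<le> 2" using J_range[OF assms] assms by (auto simp: abs_le_iff)
  then have "l * \<bar>J z - z\<bar> \<le> l * 2" by (rule mult_left_mono[OF _ rate_nonneg])
  then show ?thesis using rate_nonneg by (simp add: abs_mult mult.commute)
qed

lemma drift_lipschitz:
  assumes "z \<in> {-1..1}" "w \<in> {-1..1}"
  shows "\<bar>l * (J z - z) - l * (J w - w)\<bar> \<le> 2 * l * \<bar>z - w\<bar>"
proof -
  have "l * (J z - z) - l * (J w - w) = l * ((J z - J w) - (z - w))"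
    by (simp add: algebra_simps)
  then have "\<bar>l * (J z - z) - l * (J w - w)\<bar> = l * \<bar>(J z - J w) - (z - w)\<bar>"
    using rate_nonneg by (simp add: abs_mult)
  also have "\<dots> \<le> l * (\<bar>J z - J w\<bar> + \<bar>z - w\<bar>)"
    by (intro mult_left_mono[OF _ rate_nonneg] abs_triangle_ineq4)
  also have "\<dots> \<le> l * (2 * \<bar>z - w\<bar>)"
    using J_lipschitz[OF assms] by (intro mult_left_mono[OF _ rate_nonneg]) simp
  finally show ?thesis by (simp add: mult.assoc mult.left_commute)
qed

lemma flow_derivative_within:
  assumes "\<theta> \<in> {-1..1}" "0 \<le> a" "t \<in> {a..b}"
  shows "(flow \<theta> has_real_derivative l * (J (flow \<theta> t) - flow \<theta> t)) (at t within {a..b})"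
  using assms by (intro has_field_derivative_subset[OF flow_has_real_derivative]) auto

lemma flow_time_lipschitz:
  assumes \<theta>: "\<theta> \<in> {-1..1}" and "0 \<le> a" "a \<le> b"
  shows "\<bar>flow \<theta> b - flow \<theta> a\<bar> \<le> 2 * l * (b - a)"
proof -
  have "norm (flow \<theta> b - flow \<theta> a) \<le> 2 * l * norm (b - a)"
  proof (rule field_differentiable_bound[where S = "{a..b}"])
    fix t assume t: "t \<in> {a..b}"
    show "(flow \<theta> has_field_derivative l * (J (flow \<theta> t) - flow \<theta> t)) (at t within {a..b})"
      by (rule flow_derivative_within[OF \<theta> \<open>0 \<le> a\<close> t])
    show "norm (l * (J (flow \<theta> t) - flow \<theta> t)) \<le> 2 * l"
      using admissible_flow[OF \<theta>] t \<open>0 \<le> a\<close> by (auto simp: admissible_def intro!: drift_bound)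
  qed (use assms in auto)
  then show ?thesis using assms by simp
qed

lemma flow_euler_local_error:
  assumes \<theta>: "\<theta> \<in> {-1..1}" and a: "0 \<le> a" and h: "0 \<le> h"
  shows "\<bar>flow \<theta> (a + h) - flow \<theta> a - h * (l * (J (flow \<theta> a) - flow \<theta> a))\<bar> \<le> 4 * l\<^sup>2 * h\<^sup>2"
proof -
  define F where "F z = l * (J z - z)" for z
  have range: "flow \<theta> t \<in> {-1..1}" if "0 \<le> t" for t
    using admissible_flow[OF \<theta>] that by (auto simp: admissible_def)
  have "\<bar>(flow \<theta> (a + h) - (a + h) * F (flow \<theta> a)) - (flow \<theta> a - a * F (flow \<theta> a))\<bar>
      \<le> 4 * l\<^sup>2 * h * \<bar>(a + h) - a\<bar>"
  proof (rule field_differentiable_bound[of "{a..a + h}", simplified real_norm_def])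
    fix t assume t: "t \<in> {a..a + h}"
    show "((\<lambda>t. flow \<theta> t - t * F (flow \<theta> a)) has_field_derivative
        F (flow \<theta> t) - F (flow \<theta> a)) (at t within {a..a + h})"
      using flow_derivative_within[OF \<theta> a t] unfolding F_def by (auto intro!: derivative_eq_intros)
    have "\<bar>F (flow \<theta> t) - F (flow \<theta> a)\<bar> \<le> 2 * l * \<bar>flow \<theta> t - flow \<theta> a\<bar>"
      unfolding F_def using t a by (intro drift_lipschitz range) auto
    also have "\<dots> \<le> 2 * l * (2 * l * (t - a))"
      using t a rate_nonneg by (intro mult_left_mono flow_time_lipschitz \<theta>) auto
    also have "\<dots> \<le> 4 * l\<^sup>2 * h"
      using t rate_nonneg by (simp add: power2_eq_square mult_left_mono)
    finally show "\<bar>F (flow \<theta> t) - F (flow \<theta> a)\<bar> \<le> 4 * l\<^sup>2 * h" .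
  qed (use h in auto)
  then show ?thesis using h by (simp add: F_def power2_eq_square algebra_simps)
qed

definition euler_step :: "real \<Rightarrow> real \<Rightarrow> real" where
  "euler_step h z = z + h * (l * (J z - z))"

lemma euler_step_convex_combination: "euler_step h z = (1 - l * h) * z + (l * h) * J z"
  by (simp add: euler_step_def algebra_simps)

lemma euler_step_range:
  assumes "0 \<le> l * h" "l * h \<le> 1" "z \<in> {-1..1}"
  shows "euler_step h z \<in> {-1..1}"
proof -
  have "\<bar>euler_step h z\<bar> \<le> (1 - l * h) * \<bar>z\<bar> + (l * h) * \<bar>J z\<bar>"
    unfolding euler_step_convex_combination using assms
    by (intro abs_nonneg_comb_le) auto
  also have "\<dots> \<le> (1 - l * h) * 1 + (l * h) * 1"
    using assms J_range[OF assms(3)] by (intro add_mono mult_left_mono) (auto simp: abs_le_iff)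
  finally show ?thesis by (auto simp: abs_le_iff)
qed

lemma euler_step_nonexpansive:
  assumes "0 \<le> l * h" "l * h \<le> 1" "y \<in> {-1..1}" "z \<in> {-1..1}"
  shows "\<bar>euler_step h y - euler_step h z\<bar> \<le> \<bar>y - z\<bar>"
proof -
  have "euler_step h y - euler_step h z = (1 - l * h) * (y - z) + (l * h) * (J y - J z)"
    unfolding euler_step_convex_combination by (simp add: algebra_simps)
  also have "\<bar>\<dots>\<bar> \<le> (1 - l * h) * \<bar>y - z\<bar> + (l * h) * \<bar>J y - J z\<bar>"
    using assms by (intro abs_nonneg_comb_le) auto
  also have "\<dots> \<le> (1 - l * h) * \<bar>y - z\<bar> + (l * h) * \<bar>y - z\<bar>"
    using assms J_lipschitz[OF assms(3,4)] by (intro add_mono mult_left_mono) auto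
  finally show ?thesis by (simp add: algebra_simps)
qed

lemma euler_iterate_range:
  assumes "0 \<le> h" "l * h \<le> 1" "\<theta> \<in> {-1..1}"
  shows "(euler_step h ^^ k) \<theta> \<in> {-1..1}"
proof (induction k)
  case (Suc k)
  have "0 \<le> l * h" using assms rate_nonneg by simp
  then show ?case using euler_step_range[OF _ assms(2) Suc.IH] by simp
qed (use assms in simp)

text \<open>Local errors of order \<open>h\<^sup>2\<close> accumulate without amplification because the Euler step
  is non-expansive.\<close>
lemma euler_global_error:
  assumes \<theta>: "\<theta> \<in> {-1..1}" and h: "0 \<le> h" "l * h \<le> 1"
  shows "\<bar>(euler_step h ^^ k) \<theta> - flow \<theta> (real k * h)\<bar> \<le> real k * (4 * l\<^sup>2 * h\<^sup>2)"
proof (induction k)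
  case 0
  then show ?case by (simp add: flow_zero_time)
next
  case (Suc k)
  define a where "a = real k * h"
  have a: "0 \<le> a" using h by (simp add: a_def)
  have lh: "0 \<le> l * h" using rate_nonneg h by simp
  have flow_a: "flow \<theta> a \<in> {-1..1}" using admissible_flow[OF \<theta>] a by (auto simp: admissible_def)
  have "\<bar>(euler_step h ^^ Suc k) \<theta> - flow \<theta> (a + h)\<bar>
      \<le> \<bar>euler_step h ((euler_step h ^^ k) \<theta>) - euler_step h (flow \<theta> a)\<bar>
        + \<bar>euler_step h (flow \<theta> a) - flow \<theta> (a + h)\<bar>"
    by simp
  also have "\<dots> \<le> \<bar>(euler_step h ^^ k) \<theta> - flow \<theta> a\<bar> + 4 * l\<^sup>2 * h\<^sup>2"
  proof (rule add_mono)
    show "\<bar>euler_step h ((euler_step h ^^ k) \<theta>) - euler_step h (flow \<theta> a)\<bar>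
        \<le> \<bar>(euler_step h ^^ k) \<theta> - flow \<theta> a\<bar>"
      by (rule euler_step_nonexpansive[OF lh h(2) euler_iterate_range[OF h \<theta>] flow_a])
    show "\<bar>euler_step h (flow \<theta> a) - flow \<theta> (a + h)\<bar> \<le> 4 * l\<^sup>2 * h\<^sup>2"
      using flow_euler_local_error[OF \<theta> a h(1)] by (simp add: euler_step_def abs_minus_commute)
  qed
  also have "\<dots> \<le> real (Suc k) * (4 * l\<^sup>2 * h\<^sup>2)"
    using Suc.IH by (simp add: a_def algebra_simps)
  finally show ?case by (simp add: a_def algebra_simps)
qed

lemma nonneg_power_series_euler_iterate:
  assumes J: "nonneg_power_series J" and h: "0 \<le> h" "l * h \<le> 1"
  shows "nonneg_power_series (euler_step h ^^ k)"
proof (induction k)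
  case 0
  show ?case using nonneg_power_series_ident by (simp add: id_def)
next
  case (Suc k)
  have lh: "0 \<le> 1 - l * h" "0 \<le> l * h" using h rate_nonneg by simp_all
  have "nonneg_power_series (\<lambda>\<theta>. J ((euler_step h ^^ k) \<theta>))"
    by (rule nonneg_power_series_compose[OF J Suc.IH euler_iterate_range[OF h]])
  then have "nonneg_power_series (\<lambda>\<theta>. (1 - l * h) * (euler_step h ^^ k) \<theta> + (l * h) * J ((euler_step h ^^ k) \<theta>))"
    by (intro nonneg_power_series_add nonneg_power_series_cmult[OF lh(1) Suc.IH]
        nonneg_power_series_cmult[OF lh(2)])
  moreover have "(1 - l * h) * (euler_step h ^^ k) \<theta> + (l * h) * J ((euler_step h ^^ k) \<theta>)
      = (euler_step h ^^ Suc k) \<theta>" for \<theta>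
    by (simp only: funpow.simps(2) comp_apply euler_step_convex_combination)
  ultimately show ?case by (simp only:)
qed

lemma euler_approximation_error:
  assumes \<theta>: "\<theta> \<in> {-1..1}" and t: "0 \<le> t" and N: "0 < N" "l * t \<le> real N"
  shows "\<bar>(euler_step (t / real N) ^^ N) \<theta> - flow \<theta> t\<bar> \<le> 4 * l\<^sup>2 * t\<^sup>2 / real N"
proof -
  have h: "0 \<le> t / real N" "l * (t / real N) \<le> 1" using t N by (simp_all add: field_simps)
  have "real N * (t / real N) = t" using N by simp
  then have "\<bar>(euler_step (t / real N) ^^ N) \<theta> - flow \<theta> t\<bar> \<le> real N * (4 * l\<^sup>2 * (t / real N)\<^sup>2)"
    using euler_global_error[OF \<theta> h] by metis
  also have "\<dots> = 4 * l\<^sup>2 * t\<^sup>2 / real N" using N by (simp add: power2_eq_square)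
  finally show ?thesis .
qed

lemma uniform_limit_euler:
  assumes t: "0 \<le> t" and K: "0 < K" "l * t \<le> real K"
  shows "uniform_limit {-1..1} (\<lambda>n. euler_step (t / real (n + K)) ^^ (n + K)) (\<lambda>\<theta>. flow \<theta> t) sequentially"
proof (rule uniform_limitI)
  fix e :: real assume e: "0 < e"
  have "(\<lambda>n. 4 * l\<^sup>2 * t\<^sup>2 / real (n + K)) \<longlonglongrightarrow> 0"
    using LIMSEQ_ignore_initial_segment[OF lim_const_over_n, of "4 * l\<^sup>2 * t\<^sup>2" K] by simp
  then have small: "\<forall>\<^sub>F n in sequentially. 4 * l\<^sup>2 * t\<^sup>2 / real (n + K) < e"
    using e by (rule order_tendstoD)
  have bound: "\<bar>(euler_step (t / real (n + K)) ^^ (n + K)) \<theta> - flow \<theta> t\<bar> \<le> 4 * l\<^sup>2 * t\<^sup>2 / real (n + K)"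
    if "\<theta> \<in> {-1..1}" for n \<theta>
    using K by (intro euler_approximation_error that t) auto
  show "\<forall>\<^sub>F n in sequentially. \<forall>\<theta>\<in>{-1..1}.
      dist ((euler_step (t / real (n + K)) ^^ (n + K)) \<theta>) (flow \<theta> t) < e"
    using small
  proof eventually_elim
    case (elim n)
    show ?case
    proof
      fix \<theta> :: real assume "\<theta> \<in> {-1..1}"
      from le_less_trans[OF bound[OF this] elim]
      show "dist ((euler_step (t / real (n + K)) ^^ (n + K)) \<theta>) (flow \<theta> t) < e"
        by (simp add: dist_real_def)
    qed
  qed
qed

lemma nonneg_power_series_flow:
  assumes J: "nonneg_power_series J" and t: "0 \<le> t"
  shows "nonneg_power_series (\<lambda>\<theta>. flow \<theta> t)"
proof (rule nonneg_power_series_uniform_limit)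
  define K where "K = Suc (nat \<lceil>l * t\<rceil>)"
  have K: "0 < K" "l * t \<le> real K"
    using real_nat_ceiling_ge[of "l * t"] by (simp_all add: K_def)
  then show "uniform_limit {-1..1} (\<lambda>n. euler_step (t / real (n + K)) ^^ (n + K)) (\<lambda>\<theta>. flow \<theta> t) sequentially"
    by (rule uniform_limit_euler[OF t])
  have "0 \<le> t / real (n + K)" "l * (t / real (n + K)) \<le> 1" for n
    using K t rate_nonneg by (auto simp: field_simps intro: order_trans[OF K(2)])
  then show "nonneg_power_series (euler_step (t / real (n + K)) ^^ (n + K))" for n
    by (rule nonneg_power_series_euler_iterate[OF J])
qed

end

section \<open>Feature maps\<close>

lemma prod_list_map_mult:
  fixes f g :: "'a \<Rightarrow> 'b::comm_monoid_mult"
  shows "prod_list (map f xs) * prod_list (map g xs) = prod_list (map (\<lambda>i. f i * g i) xs)"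
  by (induction xs) (simp_all add: mult_ac)

lemma sum_prod_list_lists_length:
  fixes w :: "'n::finite \<Rightarrow> 'a::comm_semiring_1"
  shows "(\<Sum>xs | length xs = j. prod_list (map w xs)) = (\<Sum>i\<in>UNIV. w i) ^ j"
proof (induction j)
  case 0
  have "{xs :: 'n list. length xs = 0} = {[]}" by auto
  then show ?case by simp
next
  case (Suc j)
  have lists: "{xs :: 'n list. length xs = Suc j} = (\<lambda>(i, xs). i # xs) ` (UNIV \<times> {xs. length xs = j})"
    by (auto simp: length_Suc_conv)
  have "inj_on (\<lambda>(i, xs). i # xs) (UNIV \<times> {xs :: 'n list. length xs = j})"
    by (auto simp: inj_on_def)
  then have "(\<Sum>xs | length xs = Suc j. prod_list (map w xs))
      = (\<Sum>(i, xs)\<in>UNIV \<times> {xs :: 'n list. length xs = j}. w i * prod_list (map w xs))"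
    unfolding lists by (subst sum.reindex) (auto intro!: sum.cong)
  also have "\<dots> = (\<Sum>i\<in>UNIV. w i) * (\<Sum>xs | length xs = j. prod_list (map w xs))"
    by (simp add: sum.cartesian_product[symmetric] sum_product)
  finally show ?case using Suc.IH by simp
qed

lemma inner_power_eq_sum_lists:
  fixes u v :: "real^'n"
  shows "(u \<bullet> v) ^ j = (\<Sum>xs | length xs = j. prod_list (map (\<lambda>i. u $ i * v $ i) xs))"
  by (simp add: sum_prod_list_lists_length inner_vec_def)

text \<open>A power series with nonnegative coefficients in the inner product is itself an inner
  product, of monomial features indexed by words over the coordinates.\<close>
definition tensor_feature :: "(nat \<Rightarrow> real) \<Rightarrow> real^'n \<Rightarrow> 'n list \<Rightarrow> real" where
  "tensor_feature a u xs = sqrt (a (length xs)) * prod_list (map (\<lambda>i. u $ i) xs)"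

lemma tensor_feature_mult:
  assumes "\<And>j. 0 \<le> a j"
  shows "tensor_feature a u xs * tensor_feature a v xs = a (length xs) * prod_list (map (\<lambda>i. u $ i * v $ i) xs)"
  using assms[of "length xs"]
  by (simp add: tensor_feature_def mult_ac flip: prod_list_map_mult)

lemma tensor_feature_has_sum_length:
  assumes "\<And>j. 0 \<le> a j"
  shows "((\<lambda>xs. tensor_feature a u xs * tensor_feature a v xs) has_sum (a j * (u \<bullet> v) ^ j))
           {xs. length xs = j}"
proof -
  have "((\<lambda>xs. tensor_feature a u xs * tensor_feature a v xs) has_sum
      (\<Sum>xs | length xs = j. tensor_feature a u xs * tensor_feature a v xs)) {xs. length xs = j}"
    by (rule has_sum_finite[OF finite_list_length])
  moreover have "(\<Sum>xs | length xs = j. tensor_feature a u xs * tensor_feature a v xs) = a j * (u \<bullet> v) ^ j"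
    by (simp add: tensor_feature_mult[OF assms] inner_power_eq_sum_lists sum_distrib_left)
  ultimately show ?thesis by (simp only:)
qed

lemma abs_tensor_feature_summable:
  fixes u v :: "real^'n"
  assumes a0: "\<And>j. 0 \<le> a j" and summable: "summable a" and u: "norm u \<le> 1" and v: "norm v \<le> 1"
  shows "(\<lambda>xs. norm (tensor_feature a u xs * tensor_feature a v xs)) summable_on UNIV"
proof -
  define ua :: "real^'n" where "ua = (\<chi> i. \<bar>u $ i\<bar>)"
  define va :: "real^'n" where "va = (\<chi> i. \<bar>v $ i\<bar>)"
  have abs_eq: "norm (tensor_feature a u xs * tensor_feature a v xs) = tensor_feature a ua xs * tensor_feature a va xs"
    for xs
  proof -
    have "\<bar>prod_list (map (\<lambda>i. u $ i * v $ i) xs)\<bar> = prod_list (map (\<lambda>i. ua $ i * va $ i) xs)"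
      by (induction xs) (simp_all add: ua_def va_def abs_mult)
    then show ?thesis using a0 by (simp add: tensor_feature_mult abs_mult)
  qed
  have uv: "0 \<le> ua \<bullet> va" "ua \<bullet> va \<le> 1"
  proof -
    show "0 \<le> ua \<bullet> va" by (simp add: ua_def va_def inner_vec_def sum_nonneg)
    have "norm ua = norm u" "norm va = norm v" by (simp_all add: ua_def va_def norm_vec_def)
    then show "ua \<bullet> va \<le> 1" using norm_cauchy_schwarz[of ua va] mult_mono[OF u v] by simp
  qed
  have "(\<lambda>xs. tensor_feature a ua xs * tensor_feature a va xs) summable_on (\<Union>j. {xs. length xs = j})"
  proof (rule summable_on_UnionI[where A = UNIV])
    show "((\<lambda>xs. tensor_feature a ua xs * tensor_feature a va xs) has_sum (a j * (ua \<bullet> va) ^ j))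
        {xs. length xs = j}" for j
      by (rule tensor_feature_has_sum_length[OF a0])
    have "summable (\<lambda>j. a j * (ua \<bullet> va) ^ j)"
      using summable_abs_power_series[OF a0 summable, of "ua \<bullet> va"] uv
      by (simp add: summable_rabs_cancel)
    then show "(\<lambda>j. a j * (ua \<bullet> va) ^ j) summable_on UNIV"
      using a0 uv by (subst summable_on_UNIV_nonneg_real_iff) auto
    show "0 \<le> tensor_feature a ua xs * tensor_feature a va xs" for xs
      unfolding tensor_feature_mult[OF a0]
      by (intro mult_nonneg_nonneg a0 prod_list_nonneg) (auto simp: ua_def va_def)
  qed (auto simp: disjoint_family_on_def)
  moreover have "(\<Union>j. {xs :: 'n list. length xs = j}) = UNIV" by auto
  ultimately show ?thesis unfolding abs_eq by simp
qed

lemma tensor_feature_has_sum: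
  fixes u v :: "real^'n"
  assumes a0: "\<And>j. 0 \<le> a j" and summable: "summable a" and u: "norm u \<le> 1" and v: "norm v \<le> 1"
  shows "((\<lambda>xs. tensor_feature a u xs * tensor_feature a v xs) has_sum (\<Sum>j. a j * (u \<bullet> v) ^ j)) UNIV"
proof -
  define h where "h xs = tensor_feature a u xs * tensor_feature a v xs" for xs
  define L where "L j = {xs :: 'n list. length xs = j}" for j
  have "h summable_on UNIV"
    unfolding h_def by (rule Infinite_Sum.abs_summable_summable[OF abs_tensor_feature_summable[OF assms]])
  then obtain S where S: "(h has_sum S) UNIV" by (auto simp: summable_on_def)
  have "inj_on snd (Sigma UNIV L)" by (auto simp: inj_on_def L_def)
  moreover have "snd ` Sigma UNIV L = UNIV"
  proof (intro set_eqI iffI)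
    show "xs \<in> snd ` Sigma UNIV L" for xs
      by (rule image_eqI[of _ _ "(length xs, xs)"]) (auto simp: L_def)
  qed auto
  ultimately have "((h \<circ> snd) has_sum S) (Sigma UNIV L)"
    using S has_sum_reindex[of snd "Sigma UNIV L" h S] by simp
  then have "((\<lambda>j. a j * (u \<bullet> v) ^ j) has_sum S) UNIV"
    by (rule has_sum_Sigma')
       (use tensor_feature_has_sum_length[OF a0] in \<open>simp add: L_def h_def comp_def\<close>)
  then have "S = (\<Sum>j. a j * (u \<bullet> v) ^ j)"
    using sums_unique[OF has_sum_imp_sums] by blast
  then show ?thesis using S by (simp add: h_def[abs_def])
qed

lemma sgn_inner_sgn_range:
  fixes x y :: "'a::real_inner"
  shows "sgn x \<bullet> sgn y \<in> {-1..1}"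
proof -
  have "\<bar>sgn x \<bullet> sgn y\<bar> \<le> norm (sgn x) * norm (sgn y)" by (rule Cauchy_Schwarz_ineq2)
  also have "\<dots> \<le> 1" by (simp add: norm_sgn)
  finally show ?thesis by (auto simp: abs_le_iff)
qed

lemma norm_mult_sgn_inner_sgn:
  fixes x y :: "'a::real_inner"
  shows "norm x * norm y * (sgn x \<bullet> sgn y) = x \<bullet> y"
  by (cases "x = 0 \<or> y = 0") (auto simp: sgn_div_norm inner_scaleR_left inner_scaleR_right field_simps)

text \<open>Also valid when \<open>p = 0\<close> or \<open>q = 0\<close>: division by zero yields \<open>0\<close>, so both sides vanish.\<close>
lemma drift_eq_scaled:
  assumes "\<Phi> a a = p\<^sup>2" "\<Phi> b b = q\<^sup>2" "\<Phi> a b = p * q * s" "0 \<le> p" "0 \<le> q"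
  shows "drift cp cm \<Phi> a b = p * q * rho cp cm s"
  using assms by (cases "p = 0 \<or> q = 0") (auto simp: drift_def)

locale relaxation_kernel = relaxation_flow +
  assumes J_nonneg_power_series: "nonneg_power_series J" and J_one: "J 1 = 1"
begin

definition flow_coeff :: "real \<Rightarrow> nat \<Rightarrow> real" where
  "flow_coeff t = (SOME a. (\<forall>j. 0 \<le> a j) \<and> summable a \<and> (\<forall>\<theta>\<in>{-1..1}. (\<lambda>j. a j * \<theta>^j) sums flow \<theta> t))"

lemma flow_coeff:
  assumes "0 \<le> t"
  shows "\<And>j. 0 \<le> flow_coeff t j" "summable (flow_coeff t)"
    and "\<And>\<theta>. \<theta> \<in> {-1..1} \<Longrightarrow> (\<lambda>j. flow_coeff t j * \<theta>^j) sums flow \<theta> t"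
proof -
  have "\<exists>a. (\<forall>j. 0 \<le> a j) \<and> summable a \<and> (\<forall>\<theta>\<in>{-1..1}. (\<lambda>j. a j * \<theta>^j) sums flow \<theta> t)"
    using nonneg_power_series_flow[OF J_nonneg_power_series assms] unfolding nonneg_power_series_def .
  from someI_ex[OF this] show "\<And>j. 0 \<le> flow_coeff t j" "summable (flow_coeff t)"
    "\<And>\<theta>. \<theta> \<in> {-1..1} \<Longrightarrow> (\<lambda>j. flow_coeff t j * \<theta>^j) sums flow \<theta> t"
    unfolding flow_coeff_def by blast+
qed

text \<open>The words over the coordinate type are enumerated by \<open>to_nat\<close>; indices outside its
  range carry the feature \<open>0\<close>.\<close>
definition feature :: "real^'n \<Rightarrow> real \<Rightarrow> nat \<Rightarrow> real" where
  "feature x t k = (if k \<in> range (to_nat :: 'n list \<Rightarrow> nat)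
     then norm x / sqrt (real CARD('n)) * tensor_feature (flow_coeff t) (sgn x) (from_nat k) else 0)"

lemma feature_products_sums:
  fixes x y :: "real^'n"
  assumes t: "0 \<le> t"
  shows "(\<lambda>k. feature x t k * feature y t k) sums
           (norm x * norm y / real CARD('n) * flow (sgn x \<bullet> sgn y) t)"
proof -
  define C where "C = norm x * norm y / real CARD('n)"
  define F where "F k = feature x t k * feature y t k" for k
  have "((\<lambda>xs. tensor_feature (flow_coeff t) (sgn x) xs * tensor_feature (flow_coeff t) (sgn y) xs)
      has_sum (\<Sum>j. flow_coeff t j * (sgn x \<bullet> sgn y) ^ j)) UNIV"
    by (intro tensor_feature_has_sum flow_coeff[OF t]) (simp_all add: norm_sgn)
  also have "(\<Sum>j. flow_coeff t j * (sgn x \<bullet> sgn y) ^ j) = flow (sgn x \<bullet> sgn y) t"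
    using flow_coeff(3)[OF t sgn_inner_sgn_range[of x y]] by (simp add: sums_iff)
  finally have "((\<lambda>xs. C * (tensor_feature (flow_coeff t) (sgn x) xs * tensor_feature (flow_coeff t) (sgn y) xs))
      has_sum (C * flow (sgn x \<bullet> sgn y) t)) UNIV"
    by (rule has_sum_cmult_right)
  moreover have "F (to_nat xs) = C * (tensor_feature (flow_coeff t) (sgn x) xs * tensor_feature (flow_coeff t) (sgn y) xs)"
    for xs :: "'n list"
    by (simp add: F_def feature_def C_def field_simps)
  ultimately have "(F has_sum (C * flow (sgn x \<bullet> sgn y) t)) (range (to_nat :: 'n list \<Rightarrow> nat))"
    by (simp add: has_sum_reindex comp_def)
  then have "(F has_sum (C * flow (sgn x \<bullet> sgn y) t)) UNIV"
    by (rule has_sum_cong_neutral[THEN iffD1, rotated -1]) (auto simp: F_def feature_def)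
  then show ?thesis unfolding F_def[abs_def] C_def by (rule has_sum_imp_sums)
qed

lemma in_ell2_feature:
  fixes x :: "real^'n"
  shows "0 \<le> t \<Longrightarrow> in_ell2 (feature x t)"
  using feature_products_sums[of t x x] by (auto simp: in_ell2_def power2_eq_square sums_iff)

lemma ell2_inner_feature:
  fixes x y :: "real^'n"
  shows "0 \<le> t \<Longrightarrow> ell2_inner (feature x t) (feature y t) = norm x * norm y / real CARD('n) * flow (sgn x \<bullet> sgn y) t"
  using feature_products_sums[of t x y] by (simp add: ell2_inner_def sums_iff)

lemma ell2_inner_feature_self:
  fixes x :: "real^'n"
  shows "0 \<le> t \<Longrightarrow> ell2_inner (feature x t) (feature x t) = (norm x)\<^sup>2 / real CARD('n)"
proof (cases "x = 0")
  case False
  then have "sgn x \<bullet> sgn x = 1" by (simp add: power2_norm_eq_inner[symmetric] norm_sgn)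
  then show "0 \<le> t \<Longrightarrow> ?thesis" using flow_one[OF J_one] by (simp add: ell2_inner_feature power2_eq_square)
qed (simp add: ell2_inner_feature)

lemma ell2_inner_feature_initial:
  fixes x y :: "real^'n"
  shows "ell2_inner (feature x 0) (feature y 0) = (x \<bullet> y) / real CARD('n)"
  by (simp add: ell2_inner_feature flow_zero_time norm_mult_sgn_inner_sgn)

lemma ell2_inner_feature_has_real_derivative:
  fixes x y :: "real^'n"
  assumes c: "0 \<le> c"
  defines "s \<equiv> flow (sgn x \<bullet> sgn y) c"
  shows "((\<lambda>t. ell2_inner (feature x t) (feature y t)) has_real_derivative
           norm x * norm y / real CARD('n) * (l * (J s - s))) (at c within {0..})"
  unfolding s_def
  by (rule has_field_derivative_transform_within[OF DERIV_cmult[OF flow_has_real_derivative] zero_less_one])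
     (use c sgn_inner_sgn_range in \<open>auto simp: ell2_inner_feature\<close>)

lemma ell2_inner_feature_has_drift_derivative:
  fixes xs :: "nat \<Rightarrow> real^'n"
  assumes rho: "\<And>z. z \<in> {-1..1} \<Longrightarrow> rho cp cm z = l * (J z - z)" and c: "0 \<le> c"
  shows "((\<lambda>t. ell2_inner (feature (xs a) t) (feature (xs b) t)) has_real_derivative
           drift cp cm (\<lambda>a b. ell2_inner (feature (xs a) c) (feature (xs b) c)) a b) (at c within {0..})"
proof -
  define s where "s = flow (sgn (xs a) \<bullet> sgn (xs b)) c"
  define p where "p x = norm x / sqrt (real CARD('n))" for x :: "real^'n"
  have "s \<in> {-1..1}"
    using c admissible_flow[OF sgn_inner_sgn_range] by (auto simp: s_def admissible_def)
  have "drift cp cm (\<lambda>a b. ell2_inner (feature (xs a) c) (feature (xs b) c)) a b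
      = p (xs a) * p (xs b) * rho cp cm s"
    using c by (intro drift_eq_scaled)
      (auto simp: p_def s_def ell2_inner_feature_self ell2_inner_feature power_divide)
  also have "\<dots> = norm (xs a) * norm (xs b) / real CARD('n) * (l * (J s - s))"
    by (simp add: p_def rho[OF \<open>s \<in> {-1..1}\<close>])
  finally show ?thesis
    unfolding s_def using ell2_inner_feature_has_real_derivative[OF c] by simp
qed

end

lemma relaxation_kernel_arcsin_kernel:
  assumes "0 \<le> l"
  shows "relaxation_kernel arcsin_kernel l"
proof unfold_locales
  show "arcsin_kernel z \<in> {-1..1}" if "z \<in> {-1..1}" for z
    using that by (rule arcsin_kernel_range)
qed (simp_all add: assms arcsin_kernel_lipschitz nonneg_power_series_arcsin_kernel)

theorem mainTheorem3:
  fixes cp cm :: real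
  shows "\<exists>f :: real^'n \<Rightarrow> real \<Rightarrow> (nat \<Rightarrow> real).
    (\<forall>x c. c \<ge> 0 \<longrightarrow> in_ell2 (f x c)) \<and>
    (\<forall>(P::nat) (xs :: nat \<Rightarrow> real^'n).
       let \<Phi> = (\<lambda>c a b. ell2_inner (f (xs a) c) (f (xs b) c)) in
       (\<forall>a<P. \<forall>b<P.
          \<Phi> 0 a b = (xs a \<bullet> xs b) / real CARD('n) \<and>
          (\<forall>c\<ge>0. ((\<lambda>t. \<Phi> t a b) has_real_derivative drift cp cm (\<Phi> c) a b)
                     (at c within {0..}))))"
proof -
  define l where "l = (cp - cm)\<^sup>2 / 4"
  interpret relaxation_kernel arcsin_kernel l
    by (rule relaxation_kernel_arcsin_kernel) (simp add: l_def)
  have rho: "rho cp cm z = l * (arcsin_kernel z - z)" if "z \<in> {-1..1}" for z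
    using rho_eq_arcsin_kernel[OF that] by (simp add: l_def)
  show ?thesis
    unfolding Let_def
    by (intro exI[of _ feature] conjI allI impI in_ell2_feature ell2_inner_feature_initial
        ell2_inner_feature_has_drift_derivative[OF rho])
qed

end
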